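(* Let $\delta:\mathbb R\to\mathbb R$ be any function with $\lim_{x\to\infty}\delta(x)=\infty$. Suppose that, for every depth $d$, no family of depth-$d$ $\mathrm{QAC}^0$ circuits with $n$ input qubits and $n^{1+\exp(-d/\delta(d))}$ ancilla qubits computes $\mathrm{PARITY}_n$ with worst-case error $\mathrm{negl}(n)$. Then no family of $\mathrm{QAC}^0$ circuits (of constant depth) with an arbitrary polynomial number of ancilla qubits computes $\mathrm{PARITY}_n$ with worst-case error $\mathrm{negl}(n)$.
   Context: A depth-$d$ $\mathrm{QAC}^0$ circuit on $m$ qubits is a unitary $U=L_dM_d\cdots L_1M_1L_0$ where each $L_i$ is a tensor product of single-qubit unitaries and each $M_i$ is a tensor product of multi-qubit CZ gates $I-2|1^s\rangle\langle1^s|$ on pairwise disjoint sets of qubits; ancillae are initialized to $|0\rangle$, and the output is the computational-basis measurement of the first qubit. Worst-case error $\epsilon$ means the output differs from $\mathrm{PARITY}_n(x)=\bigoplus_ix_i$ with probability at most $\epsilon$ for every input $x$. $\mathrm{negl}(n)$ is a function smaller than every inverse polynomial for large $n$. *)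

theory Defs
  imports "HOL-Analysis.Analysis" "HOL-Library.FuncSet"
begin

text \<open>Qubits are indexed 0..m-1. Computational basis states of m qubits are
  extensional functions from {..<m} to bool. A state is a complex amplitude
  function on basis strings.\<close>

type_synonym qstate = "(nat \<Rightarrow> bool) \<Rightarrow> complex"

definition bits :: "nat \<Rightarrow> (nat \<Rightarrow> bool) set" where
  "bits m = PiE {..<m} (\<lambda>_. UNIV)"

text \<open>A single-qubit gate is a 2x2 complex matrix u (row, column) indexed by bool
  (False = |0>, True = |1>); it is unitary iff u^dagger u = I.\<close>
definition unitary2 :: "(bool \<Rightarrow> bool \<Rightarrow> complex) \<Rightarrow> bool" where
  "unitary2 u \<longleftrightarrow> (\<forall>a b. (\<Sum>k\<in>(UNIV::bool set). cnj (u k a) * u k b) = (if a = b then 1 else 0))"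

definition apply_local :: "nat \<Rightarrow> (nat \<Rightarrow> bool \<Rightarrow> bool \<Rightarrow> complex) \<Rightarrow> qstate \<Rightarrow> qstate" where
  "apply_local m u \<psi> = (\<lambda>x. \<Sum>y\<in>bits m. (\<Prod>i<m. u i (x i) (y i)) * \<psi> y)"

text \<open>A layer of multi-qubit CZ gates I - 2|1^s><1^s| on the pairwise disjoint
  qubit sets s in S.\<close>
definition apply_cz :: "nat set set \<Rightarrow> qstate \<Rightarrow> qstate" where
  "apply_cz S \<psi> = (\<lambda>x. (-1) ^ card {s\<in>S. \<forall>i\<in>s. x i} * \<psi> x)"

definition valid_cz_layer :: "nat \<Rightarrow> nat set set \<Rightarrow> bool" where
  "valid_cz_layer m S \<longleftrightarrow> (\<forall>s\<in>S. s \<noteq> {} \<and> s \<subseteq> {..<m}) \<and>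
     (\<forall>s\<in>S. \<forall>t\<in>S. s \<noteq> t \<longrightarrow> s \<inter> t = {})"

text \<open>A depth-d QAC0 circuit on m qubits: single-qubit layers L 0, ..., L d
  (L j i is the gate on qubit i in layer j) and CZ layers M 1, ..., M d;
  U = L_d M_d ... L_1 M_1 L_0.\<close>
definition valid_circuit :: "nat \<Rightarrow> nat \<Rightarrow> (nat \<Rightarrow> nat \<Rightarrow> bool \<Rightarrow> bool \<Rightarrow> complex)
    \<Rightarrow> (nat \<Rightarrow> nat set set) \<Rightarrow> bool" where
  "valid_circuit d m L M \<longleftrightarrow> (\<forall>j\<le>d. \<forall>i<m. unitary2 (L j i)) \<and> (\<forall>j\<in>{1..d}. valid_cz_layer m (M j))"

fun run_circuit :: "nat \<Rightarrow> (nat \<Rightarrow> nat \<Rightarrow> bool \<Rightarrow> bool \<Rightarrow> complex) \<Rightarrow> (nat \<Rightarrow> nat set set)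
    \<Rightarrow> nat \<Rightarrow> qstate \<Rightarrow> qstate" where
  "run_circuit m L M 0 \<psi> = apply_local m (L 0) \<psi>"
| "run_circuit m L M (Suc j) \<psi> = apply_local m (L (Suc j)) (apply_cz (M (Suc j)) (run_circuit m L M j \<psi>))"

definition input_state :: "nat \<Rightarrow> nat \<Rightarrow> (nat \<Rightarrow> bool) \<Rightarrow> qstate" where
  "input_state n m x = (\<lambda>y. if y = restrict (\<lambda>i. i < n \<and> x i) {..<m} then 1 else 0)"

definition prob_one :: "nat \<Rightarrow> nat \<Rightarrow> (nat \<Rightarrow> nat \<Rightarrow> bool \<Rightarrow> bool \<Rightarrow> complex) \<Rightarrow> (nat \<Rightarrow> nat set set)
    \<Rightarrow> nat \<Rightarrow> (nat \<Rightarrow> bool) \<Rightarrow> real" where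
  "prob_one d m L M n x =
     (\<Sum>y\<in>{y\<in>bits m. y 0}. (cmod (run_circuit m L M d (input_state n m x) y))\<^sup>2)"

definition parity :: "nat \<Rightarrow> (nat \<Rightarrow> bool) \<Rightarrow> bool" where
  "parity n x \<longleftrightarrow> odd (card {i. i < n \<and> x i})"

definition parity_error :: "nat \<Rightarrow> nat \<Rightarrow> (nat \<Rightarrow> nat \<Rightarrow> bool \<Rightarrow> bool \<Rightarrow> complex) \<Rightarrow> (nat \<Rightarrow> nat set set)
    \<Rightarrow> nat \<Rightarrow> (nat \<Rightarrow> bool) \<Rightarrow> real" where
  "parity_error d m L M n x =
     (if parity n x then 1 - prob_one d m L M n x else prob_one d m L M n x)"

definition negl :: "(nat \<Rightarrow> real) \<Rightarrow> bool" where
  "negl \<epsilon> \<longleftrightarrow> (\<forall>k::nat. \<forall>\<^sub>F n in sequentially. \<bar>\<epsilon> n\<bar> < 1 / real n ^ k)"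

definition qac0_computes_parity ::
  "nat \<Rightarrow> (nat \<Rightarrow> nat) \<Rightarrow> (nat \<Rightarrow> nat \<Rightarrow> nat \<Rightarrow> bool \<Rightarrow> bool \<Rightarrow> complex) \<Rightarrow> (nat \<Rightarrow> nat \<Rightarrow> nat set set) \<Rightarrow> bool" where
  "qac0_computes_parity d anc L M \<longleftrightarrow>
     (\<forall>n\<ge>1. valid_circuit d (n + anc n) (L n) (M n)) \<and>
     (\<exists>\<epsilon>. negl \<epsilon> \<and> (\<forall>n\<ge>1. \<forall>x\<in>bits n. parity_error d (n + anc n) (L n) (M n) n x \<le> \<epsilon> n))"

end

theory Submission
  imports Defs
begin

text \<open>Suppose a depth-d family computes parity with at most c n^k ancillae, and a depth-D family
  does so with C n^(1+e) ancillae. Split the n inputs into r ~ n^(1/k) blocks of s ~ n/r bits,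
  compute the block parities in parallel with the depth-D family and feed them to the depth-d
  family on r bits, whose c r^k <= c n ancillae are now linear in n. The result has depth
  D + 1 + d and O(n^(1 + e(k-1)/k)) ancillae. Projecting the intermediate state onto the correct
  block parities shows that its error is at most twice the outer error plus 2r times the block
  error, hence still negligible. Starting with e = k - 1 and iterating j times gives depth
  D = d + j(d+1) and ancilla exponent 1 + (k-1)((k-1)/k)^j, which decays exponentially in D;
  since delta tends to infinity it eventually drops below exp(-D/delta(D)), contradicting the
  hypothesis.\<close>

section \<open>Unitarity and linearity of circuits\<close>

lemma finite_bits [simp]: "finite (bits m)"
  by (simp add: bits_def finite_PiE)

lemma restrict_in_bits [simp]: "restrict f {..<m} \<in> bits m"
  by (simp add: bits_def)

lemma bits_eqI: "x \<in> bits m \<Longrightarrow> y \<in> bits m \<Longrightarrow> (\<And>i. i < m \<Longrightarrow> x i = y i) \<Longrightarrow> x = y"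
  by (auto simp: bits_def PiE_def extensional_def intro!: ext)

lemma prod_indicator:
  "finite I \<Longrightarrow> (\<Prod>l\<in>I. (if P l then 1 else 0) :: 'a::comm_semiring_1) = (if \<forall>l\<in>I. P l then 1 else 0)"
  by (induction I rule: finite_induct) auto

lemma prod_indicator_eq_bits:
  assumes "x \<in> bits m" "y \<in> bits m"
  shows "(\<Prod>i<m. (if x i = y i then 1 else 0) :: 'a::comm_semiring_1) = (if x = y then 1 else 0)"
  using bits_eqI[OF assms] by (auto simp: prod_indicator)

definition sq_norm :: "nat \<Rightarrow> qstate \<Rightarrow> real" where
  "sq_norm m \<psi> = (\<Sum>y\<in>bits m. (cmod (\<psi> y))\<^sup>2)"

definition wrong_weight :: "nat \<Rightarrow> qstate \<Rightarrow> bool \<Rightarrow> real" where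
  "wrong_weight m \<psi> b = (\<Sum>y\<in>bits m. if y 0 \<noteq> b then (cmod (\<psi> y))\<^sup>2 else 0)"

lemma wrong_weight_nonneg: "0 \<le> wrong_weight m \<psi> b"
  unfolding wrong_weight_def by (intro sum_nonneg) auto

lemma wrong_weight_le_sq_norm: "wrong_weight m \<psi> b \<le> sq_norm m \<psi>"
  unfolding wrong_weight_def sq_norm_def by (intro sum_mono) auto

lemma cmod_add_squared_le: "(cmod (a + b))\<^sup>2 \<le> 2 * (cmod a)\<^sup>2 + 2 * (cmod b)\<^sup>2"
proof -
  have "(cmod (a + b))\<^sup>2 \<le> (cmod a + cmod b)\<^sup>2"
    by (rule power_mono[OF norm_triangle_ineq]) simp
  also have "\<dots> \<le> 2 * (cmod a)\<^sup>2 + 2 * (cmod b)\<^sup>2"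
    using sum_squares_ge_zero[of "cmod a - cmod b" 0] by (simp add: power2_eq_square algebra_simps)
  finally show ?thesis .
qed

lemma wrong_weight_add_le:
  "wrong_weight m (\<lambda>y. \<phi> y + \<psi> y) b \<le> 2 * wrong_weight m \<phi> b + 2 * wrong_weight m \<psi> b"
  unfolding wrong_weight_def sum_distrib_left sum.distrib[symmetric]
  by (intro sum_mono) (simp add: cmod_add_squared_le)

lemma sq_norm_basis_state: "t \<in> bits m \<Longrightarrow> sq_norm m (\<lambda>y. if y = t then 1 else 0) = 1"
  unfolding sq_norm_def by (simp add: if_distrib[where f="\<lambda>z. (cmod z)\<^sup>2"] cong: if_cong)

lemma sq_norm_input_state [simp]: "sq_norm m (input_state n m x) = 1"
  unfolding input_state_def by (rule sq_norm_basis_state) simp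

definition id_gate :: "bool \<Rightarrow> bool \<Rightarrow> complex" where
  "id_gate a b = (if a = b then 1 else 0)"

lemma unitary2_id_gate: "unitary2 id_gate"
  unfolding unitary2_def id_gate_def by (auto simp: UNIV_bool)

lemma apply_local_id_gate: "x \<in> bits m \<Longrightarrow> apply_local m (\<lambda>_. id_gate) \<psi> x = \<psi> x"
  unfolding apply_local_def id_gate_def
  by (simp add: prod_indicator_eq_bits if_distrib[where f="\<lambda>c. c * _"] cong: if_cong)

lemma run_circuit_idle: "x \<in> bits m \<Longrightarrow> run_circuit m (\<lambda>_ _. id_gate) (\<lambda>_. {}) d \<psi> x = \<psi> x"
  by (induction d arbitrary: x) (simp_all add: apply_local_id_gate apply_cz_def)

lemma valid_circuit_idle: "valid_circuit d m (\<lambda>_ _. id_gate) (\<lambda>_. {})"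
  by (simp add: valid_circuit_def valid_cz_layer_def unitary2_id_gate)

lemma tensor_unitary_columns_orthonormal:
  assumes u: "\<forall>i<m. unitary2 (u i)" and y: "y \<in> bits m" "y' \<in> bits m"
  shows "(\<Sum>x\<in>bits m. (\<Prod>i<m. u i (x i) (y i)) * cnj (\<Prod>i<m. u i (x i) (y' i)))
         = (if y = y' then 1 else 0)"
proof -
  have "(\<Sum>x\<in>bits m. (\<Prod>i<m. u i (x i) (y i)) * cnj (\<Prod>i<m. u i (x i) (y' i)))
      = (\<Sum>x\<in>bits m. \<Prod>i<m. u i (x i) (y i) * cnj (u i (x i) (y' i)))"
    by (simp add: prod.distrib)
  also have "\<dots> = (\<Prod>i<m. \<Sum>b\<in>UNIV. u i b (y i) * cnj (u i b (y' i)))"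
    unfolding bits_def by (rule prod_sum_PiE[symmetric]) auto
  also have "\<dots> = (\<Prod>i<m. if y i = y' i then 1 else 0)"
  proof (rule prod.cong[OF refl])
    fix i assume "i \<in> {..<m}"
    then have "(\<Sum>b\<in>UNIV. cnj (u i b (y' i)) * u i b (y i)) = (if y' i = y i then 1 else 0)"
      using u unfolding unitary2_def by blast
    then show "(\<Sum>b\<in>UNIV. u i b (y i) * cnj (u i b (y' i))) = (if y i = y' i then 1 else 0)"
      by (auto simp: mult.commute)
  qed
  also have "\<dots> = (if y = y' then 1 else 0)" by (rule prod_indicator_eq_bits[OF y])
  finally show ?thesis .
qed

lemma sq_norm_apply_local:
  assumes u: "\<forall>i<m. unitary2 (u i)"
  shows "sq_norm m (apply_local m u \<psi>) = sq_norm m \<psi>"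
proof -
  let ?B = "bits m" and ?U = "\<lambda>x y. \<Prod>i<m. u i (x i) (y i)"
  have "complex_of_real (sq_norm m (apply_local m u \<psi>))
      = (\<Sum>x\<in>?B. (\<Sum>y\<in>?B. ?U x y * \<psi> y) * cnj (\<Sum>y'\<in>?B. ?U x y' * \<psi> y'))"
    unfolding sq_norm_def apply_local_def of_real_sum by (intro sum.cong refl) (rule complex_norm_square)
  also have "\<dots> = (\<Sum>x\<in>?B. \<Sum>y\<in>?B. \<Sum>y'\<in>?B. ?U x y * cnj (?U x y') * (\<psi> y * cnj (\<psi> y')))"
    by (simp add: sum_product mult_ac)
  also have "\<dots> = (\<Sum>y\<in>?B. \<Sum>y'\<in>?B. \<Sum>x\<in>?B. ?U x y * cnj (?U x y') * (\<psi> y * cnj (\<psi> y')))"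
    by (subst sum.swap) (intro sum.cong refl sum.swap)
  also have "\<dots> = (\<Sum>y\<in>?B. \<Sum>y'\<in>?B. (\<Sum>x\<in>?B. ?U x y * cnj (?U x y')) * (\<psi> y * cnj (\<psi> y')))"
    by (simp add: sum_distrib_right)
  also have "\<dots> = (\<Sum>y\<in>?B. \<Sum>y'\<in>?B. (if y = y' then 1 else 0) * (\<psi> y * cnj (\<psi> y')))"
    by (intro sum.cong refl) (simp only: tensor_unitary_columns_orthonormal[OF u])
  also have "\<dots> = (\<Sum>y\<in>?B. \<psi> y * cnj (\<psi> y))"
    by (intro sum.cong refl) (simp add: if_distrib[where f="\<lambda>c. c * _"] cong: if_cong)
  also have "\<dots> = complex_of_real (sq_norm m \<psi>)"
    unfolding sq_norm_def of_real_sum by (intro sum.cong refl) (rule complex_norm_square[symmetric])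
  finally show ?thesis using of_real_eq_iff by blast
qed

lemma sq_norm_apply_cz [simp]: "sq_norm m (apply_cz S \<psi>) = sq_norm m \<psi>"
  unfolding sq_norm_def apply_cz_def by (simp add: norm_mult norm_power)

lemma sq_norm_run_circuit:
  assumes "valid_circuit d m L M"
  shows "sq_norm m (run_circuit m L M d \<psi>) = sq_norm m \<psi>"
  using assms by (induction d) (simp_all add: valid_circuit_def sq_norm_apply_local)

lemma run_circuit_add:
  "run_circuit m L M d (\<lambda>y. \<phi> y + \<psi> y) = (\<lambda>x. run_circuit m L M d \<phi> x + run_circuit m L M d \<psi> x)"
proof -
  have local: "apply_local m u (\<lambda>y. \<phi> y + \<psi> y) = (\<lambda>x. apply_local m u \<phi> x + apply_local m u \<psi> x)"
    for u \<phi> \<psi> unfolding apply_local_def by (simp add: algebra_simps sum.distrib)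
  have cz: "apply_cz S (\<lambda>y. \<phi> y + \<psi> y) = (\<lambda>x. apply_cz S \<phi> x + apply_cz S \<psi> x)"
    for S \<phi> \<psi> unfolding apply_cz_def by (simp add: algebra_simps)
  show ?thesis by (induction d) (simp_all add: local cz)
qed

lemma run_circuit_cong:
  assumes "\<And>j. j \<le> d \<Longrightarrow> L j = L' j" "\<And>j. 1 \<le> j \<Longrightarrow> j \<le> d \<Longrightarrow> M j = M' j"
  shows "run_circuit m L M d \<psi> = run_circuit m L' M' d \<psi>"
  using assms by (induction d) auto

lemma parity_error_eq_wrong_weight:
  assumes valid: "valid_circuit d m L M" and "0 < m"
  shows "parity_error d m L M n x = wrong_weight m (run_circuit m L M d (input_state n m x)) (parity n x)"
proof -
  let ?f = "\<lambda>y. (cmod (run_circuit m L M d (input_state n m x) y))\<^sup>2"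
  have "1 = sq_norm m (run_circuit m L M d (input_state n m x))"
    by (simp add: sq_norm_run_circuit[OF valid])
  also have "\<dots> = prob_one d m L M n x + (\<Sum>y\<in>bits m. if \<not> y 0 then ?f y else 0)"
    unfolding sq_norm_def prob_one_def sum.inter_filter[OF finite_bits] sum.distrib[symmetric]
    by (intro sum.cong) auto
  finally show ?thesis
    unfolding parity_error_def wrong_weight_def prob_one_def sum.inter_filter[OF finite_bits] by auto
qed

lemma parity_error_le_1:
  assumes "valid_circuit d m L M" "0 < m"
  shows "parity_error d m L M n x \<le> 1"
  using wrong_weight_le_sq_norm[of m "run_circuit m L M d (input_state n m x)" "parity n x"]
  by (simp add: parity_error_eq_wrong_weight[OF assms] sq_norm_run_circuit[OF assms(1)])

section \<open>Sequential and parallel composition\<close>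

definition seq_gates :: "nat \<Rightarrow> (nat \<Rightarrow> 'g) \<Rightarrow> (nat \<Rightarrow> 'g) \<Rightarrow> nat \<Rightarrow> 'g" where
  "seq_gates d L L' j = (if j \<le> d then L j else L' (j - Suc d))"

definition seq_layers :: "nat \<Rightarrow> (nat \<Rightarrow> nat set set) \<Rightarrow> (nat \<Rightarrow> nat set set) \<Rightarrow> nat \<Rightarrow> nat set set" where
  "seq_layers d M M' j = (if j \<le> d then M j else if j = Suc d then {} else M' (j - Suc d))"

lemma seq_gates_first: "j \<le> d \<Longrightarrow> seq_gates d L L' j = L j"
  and seq_gates_second: "seq_gates d L L' (Suc d + j) = L' j"
  by (simp_all add: seq_gates_def)

lemma seq_layers_first: "j \<le> d \<Longrightarrow> seq_layers d M M' j = M j"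
  and seq_layers_middle: "seq_layers d M M' (Suc d) = {}"
  and seq_layers_second: "0 < j \<Longrightarrow> seq_layers d M M' (Suc d + j) = M' j"
  by (simp_all add: seq_layers_def)

text \<open>Layer Suc d is empty, so the local layer L' 0 acts right after L d.\<close>
lemma run_circuit_seq:
  "run_circuit m (seq_gates d L L') (seq_layers d M M') (Suc d + d') \<psi>
     = run_circuit m L' M' d' (run_circuit m L M d \<psi>)"
proof (induction d')
  case 0
  have "run_circuit m (seq_gates d L L') (seq_layers d M M') d \<psi> = run_circuit m L M d \<psi>"
    by (rule run_circuit_cong) (simp_all add: seq_gates_first seq_layers_first)
  then show ?case
    using seq_gates_second[of d L L' 0] by (simp add: seq_layers_middle apply_cz_def)
next
  case (Suc d')
  then show ?case
    using seq_gates_second[of d L L' "Suc d'"] seq_layers_second[of "Suc d'" d M M'] by simp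
qed

lemma valid_circuit_seq:
  assumes "valid_circuit d m L M" "valid_circuit d' m L' M'"
  shows "valid_circuit (Suc d + d') m (seq_gates d L L') (seq_layers d M M')"
  unfolding valid_circuit_def
proof (intro conjI allI impI ballI)
  fix j i assume "j \<le> Suc d + d'" "i < m"
  then show "unitary2 (seq_gates d L L' j i)"
    using assms by (cases "j \<le> d") (auto simp: valid_circuit_def seq_gates_def)
next
  fix j assume j: "j \<in> {1..Suc d + d'}"
  consider "j \<le> d" | "j = Suc d" | "Suc d < j" by linarith
  then show "valid_cz_layer m (seq_layers d M M' j)"
  proof cases
    case 3
    then have "j - Suc d \<in> {1..d'}" using j by auto
    then show ?thesis using 3 assms(2) by (simp add: valid_circuit_def seq_layers_def)
  qed (use j assms(1) in \<open>auto simp: valid_circuit_def seq_layers_def valid_cz_layer_def\<close>)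
qed

definition reg_bits :: "(nat \<Rightarrow> nat) \<Rightarrow> nat \<Rightarrow> (nat \<Rightarrow> bool) \<Rightarrow> nat \<Rightarrow> bool" where
  "reg_bits e k y = restrict (y \<circ> e) {..<k}"

lemma reg_bits_in_bits [simp]: "reg_bits e k y \<in> bits k"
  by (simp add: reg_bits_def)

lemma reg_bits_apply [simp]: "i < k \<Longrightarrow> reg_bits e k y i = y (e i)"
  by (simp add: reg_bits_def)

locale qubit_partition =
  fixes m :: nat and I :: "nat set" and width :: "nat \<Rightarrow> nat" and emb :: "nat \<Rightarrow> nat \<Rightarrow> nat"
  assumes finite_registers: "finite I"
    and bij_emb: "bij_betw (\<lambda>(l, i). emb l i) (SIGMA l:I. {..<width l}) {..<m}"
begin

abbreviation view :: "nat \<Rightarrow> (nat \<Rightarrow> bool) \<Rightarrow> nat \<Rightarrow> bool" where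
  "view l y \<equiv> reg_bits (emb l) (width l) y"

lemma emb_less: "l \<in> I \<Longrightarrow> i < width l \<Longrightarrow> emb l i < m"
  using bij_emb by (auto simp: bij_betw_def)

lemma emb_eq_iff:
  assumes "l \<in> I" "i < width l" "l' \<in> I" "i' < width l'"
  shows "emb l i = emb l' i' \<longleftrightarrow> l = l' \<and> i = i'"
  using bij_emb assms unfolding bij_betw_def inj_on_def by fastforce

definition emb_inv :: "nat \<Rightarrow> nat \<times> nat" where
  "emb_inv = the_inv_into (SIGMA l:I. {..<width l}) (\<lambda>(l, i). emb l i)"

lemma emb_inv_emb [simp]: "l \<in> I \<Longrightarrow> i < width l \<Longrightarrow> emb_inv (emb l i) = (l, i)"
  unfolding emb_inv_def using the_inv_into_f_f[OF bij_betw_imp_inj_on[OF bij_emb], of "(l, i)"] by simp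

lemma emb_inv_in: "q < m \<Longrightarrow> fst (emb_inv q) \<in> I \<and> snd (emb_inv q) < width (fst (emb_inv q))"
  unfolding emb_inv_def using bij_betw_apply[OF bij_betw_the_inv_into[OF bij_emb], of q] by auto

lemma emb_emb_inv: "q < m \<Longrightarrow> emb (fst (emb_inv q)) (snd (emb_inv q)) = q"
  unfolding emb_inv_def using f_the_inv_into_f_bij_betw[OF bij_emb, of q] by (simp add: split_beta)

definition glue :: "(nat \<Rightarrow> nat \<Rightarrow> bool) \<Rightarrow> nat \<Rightarrow> bool" where
  "glue G = (\<lambda>q. if q < m then G (fst (emb_inv q)) (snd (emb_inv q)) else undefined)"

lemma glue_in_bits: "glue G \<in> bits m"
  by (auto simp: glue_def bits_def)

lemma glue_cong: "(\<And>l. l \<in> I \<Longrightarrow> G l = G' l) \<Longrightarrow> glue G = glue G'"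
  unfolding glue_def using emb_inv_in by (auto intro!: ext)

lemma glue_view:
  assumes y: "y \<in> bits m"
  shows "glue (\<lambda>l. view l y) = y"
proof
  fix q show "glue (\<lambda>l. view l y) q = y q"
  proof (cases "q < m")
    case True
    then show ?thesis using emb_inv_in[OF True] by (simp add: glue_def emb_emb_inv)
  next
    case False
    then show ?thesis using PiE_arb[OF y[unfolded bits_def], of q] by (simp add: glue_def)
  qed
qed

lemma view_glue:
  assumes "l \<in> I" "G l \<in> bits (width l)"
  shows "view l (glue G) = G l"
proof (rule bits_eqI[OF reg_bits_in_bits assms(2)])
  fix i assume "i < width l"
  then show "view l (glue G) i = G l i"
    using assms(1) emb_less[OF assms(1) \<open>i < width l\<close>] by (simp add: glue_def)
qed

lemma bij_betw_views: "bij_betw (\<lambda>y. \<lambda>l\<in>I. view l y) (bits m) (PiE I (\<lambda>l. bits (width l)))"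
proof (rule bij_betw_byWitness[where f'=glue])
  show "\<forall>y\<in>bits m. glue (\<lambda>l\<in>I. view l y) = y"
  proof
    fix y assume "y \<in> bits m"
    have "glue (\<lambda>l\<in>I. view l y) = glue (\<lambda>l. view l y)" by (rule glue_cong) simp
    then show "glue (\<lambda>l\<in>I. view l y) = y" using glue_view[OF \<open>y \<in> bits m\<close>] by simp
  qed
  show "\<forall>G\<in>PiE I (\<lambda>l. bits (width l)). (\<lambda>l\<in>I. view l (glue G)) = G"
  proof
    fix G assume G: "G \<in> PiE I (\<lambda>l. bits (width l))"
    show "(\<lambda>l\<in>I. view l (glue G)) = G"
    proof
      fix l show "(\<lambda>l\<in>I. view l (glue G)) l = G l"
      proof (cases "l \<in> I")
        case True
        then have "G l \<in> bits (width l)" using G by blast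
        then show ?thesis using True by (simp add: view_glue)
      qed (simp add: PiE_arb[OF G])
    qed
  qed
  show "(\<lambda>y. \<lambda>l\<in>I. view l y) ` bits m \<subseteq> PiE I (\<lambda>l. bits (width l))"
    by (intro image_subsetI) simp
  show "glue ` PiE I (\<lambda>l. bits (width l)) \<subseteq> bits m"
    by (intro image_subsetI) (rule glue_in_bits)
qed

lemma bits_eq_iff_views:
  assumes "y \<in> bits m" "y' \<in> bits m"
  shows "y = y' \<longleftrightarrow> (\<forall>l\<in>I. view l y = view l y')"
  using glue_view[OF assms(1)] glue_view[OF assms(2)] glue_cong[of "\<lambda>l. view l y" "\<lambda>l. view l y'"]
  by auto

lemma basis_state_views:
  assumes "y \<in> bits m" "t \<in> bits m"
  shows "(if y = t then 1 else 0) = (\<Prod>l\<in>I. (if view l y = view l t then 1 else 0) :: 'a::comm_semiring_1)"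
  by (simp add: prod_indicator[OF finite_registers] bits_eq_iff_views[OF assms])

lemma prod_lessThan_registers: "(\<Prod>q<m. f q) = (\<Prod>l\<in>I. \<Prod>i<width l. f (emb l i))"
proof -
  have "(\<Prod>q<m. f q) = (\<Prod>li\<in>(SIGMA l:I. {..<width l}). f (case li of (l, i) \<Rightarrow> emb l i))"
    by (rule prod.reindex_bij_betw[OF bij_emb, symmetric])
  also have "\<dots> = (\<Prod>l\<in>I. \<Prod>i<width l. f (emb l i))"
    by (subst prod.Sigma) (auto simp: finite_registers split_def)
  finally show ?thesis .
qed

lemma sum_bits_prod_views:
  fixes g :: "nat \<Rightarrow> (nat \<Rightarrow> bool) \<Rightarrow> 'a::comm_semiring_1"
  shows "(\<Sum>y\<in>bits m. \<Prod>l\<in>I. g l (view l y)) = (\<Prod>l\<in>I. \<Sum>z\<in>bits (width l). g l z)"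
proof -
  have "(\<Prod>l\<in>I. \<Sum>z\<in>bits (width l). g l z) = (\<Sum>G\<in>PiE I (\<lambda>l. bits (width l)). \<Prod>l\<in>I. g l (G l))"
    by (rule prod_sum_PiE) (simp_all add: finite_registers)
  also have "\<dots> = (\<Sum>y\<in>bits m. \<Prod>l\<in>I. g l ((\<lambda>l\<in>I. view l y) l))"
    by (rule sum.reindex_bij_betw[OF bij_betw_views, symmetric])
  also have "\<dots> = (\<Sum>y\<in>bits m. \<Prod>l\<in>I. g l (view l y))"
    by (intro sum.cong prod.cong) auto
  finally show ?thesis ..
qed

lemma sum_bits_marginal:
  fixes f :: "nat \<Rightarrow> (nat \<Rightarrow> bool) \<Rightarrow> 'a::comm_semiring_1"
  assumes k: "k \<in> I"
  shows "(\<Sum>y\<in>bits m. if P (view k y) then \<Prod>l\<in>I. f l (view l y) else 0)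
       = (\<Sum>z\<in>bits (width k). if P z then f k z else 0) * (\<Prod>l\<in>I - {k}. \<Sum>z\<in>bits (width l). f l z)"
proof -
  define g where "g l z = (if l = k then (if P z then f k z else 0) else f l z)" for l z
  have rest: "(\<Prod>l\<in>I - {k}. g l (h l)) = (\<Prod>l\<in>I - {k}. f l (h l))" for h
    by (rule prod.cong) (auto simp: g_def)
  have "(\<Sum>y\<in>bits m. if P (view k y) then \<Prod>l\<in>I. f l (view l y) else 0)
      = (\<Sum>y\<in>bits m. \<Prod>l\<in>I. g l (view l y))"
    by (intro sum.cong refl)
       (simp add: prod.remove[OF finite_registers k] rest[of "\<lambda>l. view l _"] g_def)
  also have "\<dots> = (\<Prod>l\<in>I. \<Sum>z\<in>bits (width l). g l z)"
    by (rule sum_bits_prod_views)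
  also have "\<dots> = (\<Sum>z\<in>bits (width k). if P z then f k z else 0) * (\<Prod>l\<in>I - {k}. \<Sum>z\<in>bits (width l). f l z)"
    by (simp add: prod.remove[OF finite_registers k] g_def)
  finally show ?thesis .
qed

lemma image_emb_eq_iff:
  assumes "l \<in> I" "l' \<in> I" "s \<subseteq> {..<width l}" "s' \<subseteq> {..<width l'}" "s \<noteq> {}"
  shows "emb l ` s = emb l' ` s' \<longleftrightarrow> l = l' \<and> s = s'"
proof
  assume eq: "emb l ` s = emb l' ` s'"
  obtain i where "i \<in> s" using assms(5) by blast
  then obtain i' where "i' \<in> s'" "emb l i = emb l' i'" using eq by (metis imageE imageI)
  then have "l = l'" using assms \<open>i \<in> s\<close> by (auto simp: emb_eq_iff subset_iff)
  moreover have "inj_on (emb l) {..<width l}" using assms(1) by (auto simp: inj_on_def emb_eq_iff)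
  ultimately show "l = l' \<and> s = s'" using eq assms(3,4) inj_on_image_eq_iff by metis
qed simp

definition par_gates :: "(nat \<Rightarrow> nat \<Rightarrow> nat \<Rightarrow> bool \<Rightarrow> bool \<Rightarrow> complex) \<Rightarrow> nat \<Rightarrow> nat \<Rightarrow> bool \<Rightarrow> bool \<Rightarrow> complex"
  where "par_gates U j q = (if q < m then U (fst (emb_inv q)) j (snd (emb_inv q)) else id_gate)"

definition par_layers :: "(nat \<Rightarrow> nat \<Rightarrow> nat set set) \<Rightarrow> nat \<Rightarrow> nat set set" where
  "par_layers S j = (\<Union>l\<in>I. image (emb l) ` S l j)"

lemma par_gates_emb [simp]: "l \<in> I \<Longrightarrow> i < width l \<Longrightarrow> par_gates U j (emb l i) = U l j i"
  by (simp add: par_gates_def emb_less)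

lemma apply_local_tensor:
  assumes \<psi>: "\<And>y. y \<in> bits m \<Longrightarrow> \<psi> y = (\<Prod>l\<in>I. \<phi> l (view l y))"
  shows "apply_local m (par_gates U j) \<psi> x = (\<Prod>l\<in>I. apply_local (width l) (U l j) (\<phi> l) (view l x))"
proof -
  let ?g = "\<lambda>l z. (\<Prod>i<width l. U l j i (view l x i) (z i)) * \<phi> l z"
  have "apply_local m (par_gates U j) \<psi> x = (\<Sum>y\<in>bits m. \<Prod>l\<in>I. ?g l (view l y))"
    unfolding apply_local_def
  proof (rule sum.cong[OF refl])
    fix y assume y: "y \<in> bits m"
    have "(\<Prod>q<m. par_gates U j q (x q) (y q))
        = (\<Prod>l\<in>I. \<Prod>i<width l. par_gates U j (emb l i) (x (emb l i)) (y (emb l i)))"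
      by (rule prod_lessThan_registers)
    also have "\<dots> = (\<Prod>l\<in>I. \<Prod>i<width l. U l j i (view l x i) (view l y i))"
      by (intro prod.cong refl) simp
    finally show "(\<Prod>q<m. par_gates U j q (x q) (y q)) * \<psi> y = (\<Prod>l\<in>I. ?g l (view l y))"
      using \<psi>[OF y] by (simp add: prod.distrib)
  qed
  also have "\<dots> = (\<Prod>l\<in>I. \<Sum>z\<in>bits (width l). ?g l z)"
    by (rule sum_bits_prod_views)
  finally show ?thesis unfolding apply_local_def .
qed

lemma card_par_layer:
  assumes S: "\<forall>l\<in>I. valid_cz_layer (width l) (S l)"
  shows "card {t \<in> (\<Union>l\<in>I. image (emb l) ` S l). \<forall>q\<in>t. x q}
       = (\<Sum>l\<in>I. card {s \<in> S l. \<forall>i\<in>s. view l x i})"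
proof -
  let ?T = "\<lambda>l. {s \<in> S l. \<forall>i\<in>s. view l x i}"
  have sub: "s \<subseteq> {..<width l}" "s \<noteq> {}" if "l \<in> I" "s \<in> S l" for l s
    using S that by (auto simp: valid_cz_layer_def)
  have fin: "finite (S l)" if "l \<in> I" for l
    by (rule finite_subset[of _ "Pow {..<width l}"]) (use sub(1)[OF that] in auto)
  have view: "(\<forall>q\<in>emb l ` s. x q) \<longleftrightarrow> (\<forall>i\<in>s. view l x i)" if "l \<in> I" "s \<in> S l" for l s
    using sub(1)[OF that] by (auto simp: subset_iff)
  have "{t \<in> (\<Union>l\<in>I. image (emb l) ` S l). \<forall>q\<in>t. x q}
      = (\<Union>l\<in>I. image (emb l) ` {s \<in> S l. \<forall>q\<in>emb l ` s. x q})"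
    by blast
  also have "\<dots> = (\<Union>l\<in>I. image (emb l) ` ?T l)"
    using view by (intro SUP_cong refl arg_cong[where f="image _"] Collect_cong) auto
  also have "card \<dots> = (\<Sum>l\<in>I. card (image (emb l) ` ?T l))"
    using fin sub by (intro card_UN_disjoint finite_registers) (auto simp: image_emb_eq_iff)
  also have "\<dots> = (\<Sum>l\<in>I. card (?T l))"
    using sub by (intro sum.cong card_image inj_onI) (auto simp: image_emb_eq_iff)
  finally show ?thesis .
qed

lemma run_circuit_tensor:
  assumes layers: "\<forall>l\<in>I. \<forall>j\<in>{1..d}. valid_cz_layer (width l) (S l j)"
    and \<psi>: "\<And>y. y \<in> bits m \<Longrightarrow> \<psi> y = (\<Prod>l\<in>I. \<phi> l (view l y))"
  shows "run_circuit m (par_gates U) (par_layers S) d \<psi> x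
       = (\<Prod>l\<in>I. run_circuit (width l) (U l) (S l) d (\<phi> l) (view l x))"
  using layers
proof (induction d arbitrary: x)
  case 0
  then show ?case using apply_local_tensor[where \<psi>=\<psi> and \<phi>=\<phi>] \<psi> by simp
next
  case (Suc d)
  let ?R = "\<lambda>l. run_circuit (width l) (U l) (S l) d (\<phi> l)"
  have IH: "run_circuit m (par_gates U) (par_layers S) d \<psi> x = (\<Prod>l\<in>I. ?R l (view l x))" for x
    using Suc by auto
  have "apply_cz (par_layers S (Suc d)) (run_circuit m (par_gates U) (par_layers S) d \<psi>) y
      = (\<Prod>l\<in>I. apply_cz (S l (Suc d)) (?R l) (view l y))" for y
    using card_par_layer[of "\<lambda>l. S l (Suc d)" y] Suc.prems
    by (simp add: apply_cz_def par_layers_def IH power_sum prod.distrib)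
  then show ?case by (simp add: apply_local_tensor)
qed

lemma valid_circuit_par:
  assumes "\<forall>l\<in>I. valid_circuit d (width l) (U l) (S l)"
  shows "valid_circuit d m (par_gates U) (par_layers S)"
  unfolding valid_circuit_def
proof (intro conjI allI impI ballI)
  fix j q assume "j \<le> d" "q < m"
  then show "unitary2 (par_gates U j q)"
    using assms emb_inv_in[of q] by (auto simp: valid_circuit_def par_gates_def)
next
  fix j assume j: "j \<in> {1..d}"
  have S: "\<forall>l\<in>I. valid_cz_layer (width l) (S l j)"
    using assms j by (auto simp: valid_circuit_def)
  show "valid_cz_layer m (par_layers S j)"
    unfolding valid_cz_layer_def
  proof (intro conjI ballI impI)
    fix t assume "t \<in> par_layers S j"
    then obtain l s where "l \<in> I" "s \<in> S l j" "t = emb l ` s" by (auto simp: par_layers_def)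
    moreover have "s \<noteq> {}" "s \<subseteq> {..<width l}" using S \<open>l \<in> I\<close> \<open>s \<in> S l j\<close> by (auto simp: valid_cz_layer_def)
    ultimately show "t \<noteq> {}" "t \<subseteq> {..<m}" using emb_less by auto
  next
    fix t t' assume t: "t \<in> par_layers S j" "t' \<in> par_layers S j" "t \<noteq> t'"
    obtain l s where s: "l \<in> I" "s \<in> S l j" "t = emb l ` s" using t(1) by (auto simp: par_layers_def)
    obtain l' s' where s': "l' \<in> I" "s' \<in> S l' j" "t' = emb l' ` s'" using t(2) by (auto simp: par_layers_def)
    show "t \<inter> t' = {}"
    proof (rule ccontr)
      assume "t \<inter> t' \<noteq> {}"
      then obtain i i' where i: "i \<in> s" "i' \<in> s'" "emb l i = emb l' i'" using s s' by auto
      have "i < width l" "i' < width l'" using S s s' i by (auto simp: valid_cz_layer_def)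
      then have "l = l'" "i = i'" using i(3) s(1) s'(1) by (simp_all add: emb_eq_iff)
      then have "s = s'" using S s(1,2) s'(2) i(1,2) unfolding valid_cz_layer_def by blast
      then show False using t(3) s s' \<open>l = l'\<close> by simp
    qed
  qed
qed

end

section \<open>Computing parity blockwise\<close>

lemma parity_cong: "(\<And>i. i < n \<Longrightarrow> x i = y i) \<Longrightarrow> parity n x = parity n y"
  unfolding parity_def by (metis (mono_tags, lifting) Collect_cong)

lemma odd_sum_iff_odd_card: "odd (\<Sum>l<(r::nat). c l :: nat) \<longleftrightarrow> odd (card {l. l < r \<and> odd (c l)})"
proof (induction r)
  case (Suc r)
  have "{l. l < Suc r \<and> odd (c l)} = {l. l < r \<and> odd (c l)} \<union> (if odd (c r) then {r} else {})"
    by (auto simp: less_Suc_eq)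
  then show ?case using Suc by auto
qed simp

lemma parity_blocks:
  assumes "n \<le> r * s"
  shows "parity n x = parity r (\<lambda>l. parity s (\<lambda>i. l * s + i < n \<and> x (l * s + i)))"
proof -
  have "card {i. i < n \<and> x i} = (\<Sum>i<r * s. of_bool (i < n \<and> x i) :: nat)"
  proof -
    have "{..<r * s} \<inter> {i. i < n \<and> x i} = {i. i < n \<and> x i}" using assms by auto
    then show ?thesis by simp
  qed
  also have "\<dots> = (\<Sum>l<r. \<Sum>i\<in>{l * s..<l * s + s}. of_bool (i < n \<and> x i))"
    by (rule sum.nat_group[symmetric])
  also have "\<dots> = (\<Sum>l<r. card {i. i < s \<and> (l * s + i < n \<and> x (l * s + i))})"
  proof (rule sum.cong[OF refl])
    fix l
    have block: "{l * s..<l * s + s} = (\<lambda>i. l * s + i) ` {..<s}"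
    proof (intro equalityI subsetI)
      fix i assume "i \<in> {l * s..<l * s + s}"
      then show "i \<in> (\<lambda>i. l * s + i) ` {..<s}" by (intro image_eqI[where x="i - l * s"]) auto
    qed auto
    have "(\<Sum>i\<in>{l * s..<l * s + s}. of_bool (i < n \<and> x i) :: nat)
        = (\<Sum>i<s. of_bool (l * s + i < n \<and> x (l * s + i)))"
      unfolding block by (subst sum.reindex) (auto simp: inj_on_def)
    also have "{..<s} \<inter> {i. l * s + i < n \<and> x (l * s + i)} = {i. i < s \<and> (l * s + i < n \<and> x (l * s + i))}"
      by auto
    then have "(\<Sum>i<s. of_bool (l * s + i < n \<and> x (l * s + i)) :: nat)
        = card {i. i < s \<and> (l * s + i < n \<and> x (l * s + i))}"
      by simp
    finally show "(\<Sum>i\<in>{l * s..<l * s + s}. of_bool (i < n \<and> x i) :: nat)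
        = card {i. i < s \<and> (l * s + i < n \<and> x (l * s + i))}" .
  qed
  finally show ?thesis unfolding parity_def by (simp add: odd_sum_iff_odd_card)
qed

lemma mult_add_less_mult:
  assumes "l < r" "i < s"
  shows "l * s + i < r * (s::nat)"
proof -
  have "l * s + i < Suc l * s" using assms(2) by simp
  also have "\<dots> \<le> r * s" using assms(1) by (intro mult_le_mono1) simp
  finally show ?thesis .
qed

definition compl_enum :: "nat \<Rightarrow> nat set \<Rightarrow> nat \<Rightarrow> nat" where
  "compl_enum m Q i = sorted_list_of_set ({..<m} - Q) ! i"

lemma qubit_partition_image_compl:
  assumes inj: "inj_on f {..<k}" and range: "f ` {..<k} \<subseteq> {..<m}"
  shows "qubit_partition m {0, 1} (\<lambda>l. if l = 0 then k else m - k)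
           (\<lambda>l. if l = 0 then f else compl_enum m (f ` {..<k}))"
proof
  let ?C = "{..<m} - f ` {..<k}"
  let ?e = "\<lambda>(l, i). (if l = (0::nat) then f else compl_enum m (f ` {..<k})) i"
  have card: "card ?C = m - k"
    using range card_image[OF inj] by (simp add: card_Diff_subset)
  have single: "bij_betw (\<lambda>(l, i). h l i) ({c} \<times> X) Y" if "bij_betw (h c) X Y" for h c X Y
  proof -
    have "(\<lambda>(l, i). h l i) ` ({c} \<times> X) = h c ` X" by force
    then show ?thesis using that unfolding bij_betw_def inj_on_def by auto
  qed
  have "bij_betw ?e ({0} \<times> {..<k}) (f ` {..<k})"
    by (rule single) (simp add: inj_on_imp_bij_betw[OF inj])
  moreover have "bij_betw ?e ({1} \<times> {..<m - k}) ?C"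
    by (rule single) (simp add: compl_enum_def bij_betw_nth card)
  ultimately have "bij_betw ?e ({0} \<times> {..<k} \<union> {1} \<times> {..<m - k}) (f ` {..<k} \<union> ?C)"
    by (rule bij_betw_combine) blast
  moreover have "{0} \<times> {..<k} \<union> {1} \<times> {..<m - k} = (SIGMA l:{0::nat, 1}. {..<if l = 0 then k else m - k})"
    by auto
  moreover have "f ` {..<k} \<union> ?C = {..<m}" using range by auto
  ultimately show "bij_betw ?e (SIGMA l:{0, 1}. {..<if l = 0 then k else m - k}) {..<m}"
    by simp
qed simp

text \<open>Qubit layout of the composed circuit: block l < r has its s inputs at l * s ..< l * s + s
  and its A ancillae at r * s + l * A ..< r * s + l * A + A; register r consists of the last B
  qubits, the ancillae of the outer circuit, whose inputs are the block outputs l * s.\<close>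
locale block_layout =
  fixes r s A B :: nat
  assumes r_pos: "0 < r" and s_pos: "0 < s"
begin

abbreviation total :: nat where
  "total \<equiv> r * s + r * A + B"

definition block_width :: "nat \<Rightarrow> nat" where
  "block_width l = (if l < r then s + A else B)"

definition block_emb :: "nat \<Rightarrow> nat \<Rightarrow> nat" where
  "block_emb l i =
     (if l < r then (if i < s then l * s + i else r * s + l * A + (i - s)) else r * s + r * A + i)"

definition block_emb_inv :: "nat \<Rightarrow> nat \<times> nat" where
  "block_emb_inv q =
     (if q < r * s then (q div s, q mod s)
      else if q < r * s + r * A then ((q - r * s) div A, s + (q - r * s) mod A)
      else (r, q - (r * s + r * A)))"

lemma block_emb_inv_emb:
  assumes "l \<le> r" "i < block_width l"
  shows "block_emb_inv (block_emb l i) = (l, i)"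
proof -
  consider "l < r" "i < s" | "l < r" "\<not> i < s" | "l = r" using assms(1) by linarith
  then show ?thesis
  proof cases
    case 1
    then show ?thesis using mult_add_less_mult[OF 1] by (simp add: block_emb_inv_def block_emb_def)
  next
    case 2
    define j where "j = i - s"
    have i: "i = s + j" using 2 by (simp add: j_def)
    have "j < A" using assms(2) 2 by (simp add: block_width_def j_def)
    then have "0 < A" "l * A + j < r * A" using mult_add_less_mult[OF \<open>l < r\<close>] by auto
    then show ?thesis using \<open>j < A\<close> \<open>l < r\<close> unfolding i by (simp add: block_emb_inv_def block_emb_def)
  qed (simp add: block_emb_inv_def block_emb_def)
qed

lemma block_emb_emb_inv:
  assumes "q < total"
  shows "fst (block_emb_inv q) \<le> r \<and> snd (block_emb_inv q) < block_width (fst (block_emb_inv q))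
    \<and> block_emb (fst (block_emb_inv q)) (snd (block_emb_inv q)) = q"
proof -
  consider "q < r * s" | "r * s \<le> q" "q < r * s + r * A" | "r * s + r * A \<le> q" by linarith
  then show ?thesis
  proof cases
    case 1
    then have "q div s < r" using s_pos by (simp add: div_less_iff_less_mult)
    moreover have "q mod s < s" using s_pos by simp
    ultimately show ?thesis using 1 by (simp add: block_emb_inv_def block_emb_def block_width_def)
  next
    case 2
    then have A: "0 < A" by (cases A) auto
    have "(q - r * s) div A < r" using 2 A by (simp add: div_less_iff_less_mult)
    then show ?thesis using 2 A by (simp add: block_emb_inv_def block_emb_def block_width_def)
  next
    case 3
    then show ?thesis using assms by (simp add: block_emb_inv_def block_emb_def block_width_def)
  qed
qed

lemma block_emb_less:
  assumes "l \<le> r" "i < block_width l"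
  shows "block_emb l i < total"
proof -
  consider "l < r" "i < s" | "l < r" "\<not> i < s" | "l = r" using assms(1) by linarith
  then show ?thesis
  proof cases
    case 1
    then show ?thesis using mult_add_less_mult[OF 1] by (simp add: block_emb_def)
  next
    case 2
    then have "i - s < A" using assms(2) by (simp add: block_width_def)
    then show ?thesis using 2 mult_add_less_mult[OF \<open>l < r\<close> \<open>i - s < A\<close>] by (simp add: block_emb_def)
  next
    case 3
    then show ?thesis using assms(2) by (simp add: block_emb_def block_width_def)
  qed
qed

lemma bij_block_emb:
  "bij_betw (\<lambda>(l, i). block_emb l i) (SIGMA l:{..r}. {..<block_width l}) {..<total}"
proof (rule bij_betw_byWitness[where f'=block_emb_inv])
  show "\<forall>li\<in>(SIGMA l:{..r}. {..<block_width l}). block_emb_inv (case li of (l, i) \<Rightarrow> block_emb l i) = li"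
    by (auto simp: block_emb_inv_emb)
  show "\<forall>q\<in>{..<total}. (case block_emb_inv q of (l, i) \<Rightarrow> block_emb l i) = q"
    using block_emb_emb_inv by (simp add: split_beta)
  show "block_emb_inv ` {..<total} \<subseteq> (SIGMA l:{..r}. {..<block_width l})"
  proof (rule image_subsetI)
    fix q assume "q \<in> {..<total}"
    then show "block_emb_inv q \<in> (SIGMA l:{..r}. {..<block_width l})"
      using block_emb_emb_inv[of q] by (cases "block_emb_inv q") auto
  qed
  show "(\<lambda>(l, i). block_emb l i) ` (SIGMA l:{..r}. {..<block_width l}) \<subseteq> {..<total}"
    using block_emb_less by auto
qed

sublocale blocks: qubit_partition total "{..r}" block_width block_emb
  by unfold_locales (simp_all add: bij_block_emb)

lemma block_emb_output: "l < r \<Longrightarrow> block_emb l 0 = l * s"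
  using s_pos by (simp add: block_emb_def)

definition outer_emb :: "nat \<Rightarrow> nat" where
  "outer_emb i = (if i < r then block_emb i 0 else block_emb r (i - r))"

lemma outer_emb_zero: "outer_emb 0 = 0"
  using r_pos s_pos by (simp add: outer_emb_def block_emb_def)

lemma outer_emb_eq_block_emb: "(l, i) = (if j < r then (j, 0) else (r, j - r)) \<Longrightarrow> j < r + B \<Longrightarrow>
    outer_emb j = block_emb l i \<and> l \<le> r \<and> i < block_width l"
  using s_pos by (auto simp: outer_emb_def block_width_def split: if_splits)

lemma inj_outer_emb: "inj_on outer_emb {..<r + B}"
proof
  fix j j' assume "j \<in> {..<r + B}" "j' \<in> {..<r + B}" "outer_emb j = outer_emb j'"
  moreover obtain l i where "(l, i) = (if j < r then (j, 0) else (r, j - r))" by (metis surj_pair)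
  moreover obtain l' i' where "(l', i') = (if j' < r then (j', 0) else (r, j' - r))" by (metis surj_pair)
  ultimately show "j = j'"
    using outer_emb_eq_block_emb[of l i j] outer_emb_eq_block_emb[of l' i' j'] blocks.emb_eq_iff[of l i l' i']
    by (auto split: if_splits)
qed

lemma outer_emb_less: "outer_emb ` {..<r + B} \<subseteq> {..<total}"
proof
  fix q assume "q \<in> outer_emb ` {..<r + B}"
  then obtain j where j: "j < r + B" "q = outer_emb j" by auto
  obtain l i where "(l, i) = (if j < r then (j, 0) else (r, j - r))" by (metis surj_pair)
  then show "q \<in> {..<total}" using outer_emb_eq_block_emb[of l i j] j blocks.emb_less by auto
qed

definition outer_width :: "nat \<Rightarrow> nat" where
  "outer_width l = (if l = 0 then r + B else total - (r + B))"

definition outer_split :: "nat \<Rightarrow> nat \<Rightarrow> nat" where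
  "outer_split l = (if l = 0 then outer_emb else compl_enum total (outer_emb ` {..<r + B}))"

sublocale outer: qubit_partition total "{0, 1}" outer_width outer_split
  unfolding outer_width_def outer_split_def
  by (rule qubit_partition_image_compl[OF inj_outer_emb outer_emb_less])

definition block_stage_gates :: "(nat \<Rightarrow> nat \<Rightarrow> bool \<Rightarrow> bool \<Rightarrow> complex) \<Rightarrow> nat \<Rightarrow> nat \<Rightarrow> bool \<Rightarrow> bool \<Rightarrow> complex"
  where "block_stage_gates Lb = blocks.par_gates (\<lambda>l. if l < r then Lb else (\<lambda>_ _. id_gate))"

definition block_stage_layers :: "(nat \<Rightarrow> nat set set) \<Rightarrow> nat \<Rightarrow> nat set set" where
  "block_stage_layers Mb = blocks.par_layers (\<lambda>l. if l < r then Mb else (\<lambda>_. {}))"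

definition outer_stage_gates :: "(nat \<Rightarrow> nat \<Rightarrow> bool \<Rightarrow> bool \<Rightarrow> complex) \<Rightarrow> nat \<Rightarrow> nat \<Rightarrow> bool \<Rightarrow> bool \<Rightarrow> complex"
  where "outer_stage_gates Lo = outer.par_gates (\<lambda>l. if l = 0 then Lo else (\<lambda>_ _. id_gate))"

definition outer_stage_layers :: "(nat \<Rightarrow> nat set set) \<Rightarrow> nat \<Rightarrow> nat set set" where
  "outer_stage_layers Mo = outer.par_layers (\<lambda>l. if l = 0 then Mo else (\<lambda>_. {}))"

definition composed_gates where
  "composed_gates D Lb Lo = seq_gates D (block_stage_gates Lb) (outer_stage_gates Lo)"

definition composed_layers where
  "composed_layers D Mb Mo = seq_layers D (block_stage_layers Mb) (outer_stage_layers Mo)"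

lemma valid_block_stage:
  "valid_circuit D (s + A) Lb Mb \<Longrightarrow> valid_circuit D total (block_stage_gates Lb) (block_stage_layers Mb)"
  unfolding block_stage_gates_def block_stage_layers_def
  by (rule blocks.valid_circuit_par) (auto simp: block_width_def valid_circuit_idle)

lemma valid_outer_stage:
  "valid_circuit D0 (r + B) Lo Mo \<Longrightarrow> valid_circuit D0 total (outer_stage_gates Lo) (outer_stage_layers Mo)"
  unfolding outer_stage_gates_def outer_stage_layers_def
  by (rule outer.valid_circuit_par) (auto simp: outer_width_def valid_circuit_idle)

lemma valid_composed:
  "valid_circuit D (s + A) Lb Mb \<Longrightarrow> valid_circuit D0 (r + B) Lo Mo \<Longrightarrow>
    valid_circuit (Suc D + D0) total (composed_gates D Lb Lo) (composed_layers D Mb Mo)"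
  unfolding composed_gates_def composed_layers_def
  by (intro valid_circuit_seq valid_block_stage valid_outer_stage)

end

section \<open>Error of the composed circuit\<close>

locale composed_parity = block_layout +
  fixes D D0 :: nat and Lb Lo :: "nat \<Rightarrow> nat \<Rightarrow> bool \<Rightarrow> bool \<Rightarrow> complex"
    and Mb Mo :: "nat \<Rightarrow> nat set set"
  assumes valid_inner: "valid_circuit D (s + A) Lb Mb"
    and valid_outer: "valid_circuit D0 (r + B) Lo Mo"

locale composed_input = composed_parity +
  fixes n :: nat and x :: "nat \<Rightarrow> bool"
  assumes n_le: "n \<le> r * s"
begin

definition block_input :: "nat \<Rightarrow> nat \<Rightarrow> bool" where
  "block_input l = restrict (\<lambda>i. l * s + i < n \<and> x (l * s + i)) {..<s}"

definition block_parities :: "nat \<Rightarrow> bool" where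
  "block_parities = restrict (\<lambda>l. parity s (block_input l)) {..<r}"

lemma parity_eq_block_parities: "parity n x = parity r block_parities"
proof -
  have "parity n x = parity r (\<lambda>l. parity s (\<lambda>i. l * s + i < n \<and> x (l * s + i)))"
    by (rule parity_blocks[OF n_le])
  also have "\<dots> = parity r block_parities"
  proof (rule parity_cong)
    fix l assume "l < r"
    have "parity s (\<lambda>i. l * s + i < n \<and> x (l * s + i)) = parity s (block_input l)"
      by (rule parity_cong) (simp add: block_input_def)
    then show "parity s (\<lambda>i. l * s + i < n \<and> x (l * s + i)) = block_parities l"
      using \<open>l < r\<close> by (simp add: block_parities_def)
  qed
  finally show ?thesis .
qed

definition block_state :: "nat \<Rightarrow> qstate" where
  "block_state l = run_circuit (block_width l) (if l < r then Lb else (\<lambda>_ _. id_gate))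
     (if l < r then Mb else (\<lambda>_. {})) D (input_state (if l < r then s else 0) (block_width l) (block_input l))"

definition mid_state :: qstate where
  "mid_state = run_circuit total (block_stage_gates Lb) (block_stage_layers Mb) D (input_state n total x)"

lemma input_bit_block:
  assumes "l \<le> r" "i < block_width l"
  shows "(block_emb l i < n \<and> x (block_emb l i)) \<longleftrightarrow> i < (if l < r then s else 0) \<and> block_input l i"
proof (cases "l < r \<and> i < s")
  case True
  then show ?thesis by (simp add: block_emb_def block_input_def)
next
  case False
  then have "r * s \<le> block_emb l i" using assms by (auto simp: block_emb_def)
  then show ?thesis using False n_le by auto
qed

lemma input_state_tensor:
  assumes y: "y \<in> bits total"
  shows "input_state n total x y
    = (\<Prod>l\<in>{..r}. input_state (if l < r then s else 0) (block_width l) (block_input l) (blocks.view l y))"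
proof -
  define t where "t = restrict (\<lambda>i. i < n \<and> x i) {..<total}"
  have view_t: "blocks.view l t = restrict (\<lambda>i. i < (if l < r then s else 0) \<and> block_input l i) {..<block_width l}"
    if "l \<le> r" for l
    by (rule bits_eqI[OF reg_bits_in_bits restrict_in_bits])
       (simp add: t_def that blocks.emb_less input_bit_block)
  have "input_state n total x y = (if y = t then 1 else 0)" by (simp add: input_state_def t_def)
  also have "\<dots> = (\<Prod>l\<in>{..r}. if blocks.view l y = blocks.view l t then 1 else 0)"
    by (rule blocks.basis_state_views[OF y]) (simp add: t_def)
  finally show ?thesis by (simp add: view_t input_state_def)
qed

lemma mid_state_tensor: "mid_state y = (\<Prod>l\<in>{..r}. block_state l (blocks.view l y))"
  unfolding mid_state_def block_state_def block_stage_gates_def block_stage_layers_def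
  by (rule blocks.run_circuit_tensor)
     (use valid_inner in \<open>auto simp: valid_circuit_def block_width_def valid_cz_layer_def input_state_tensor\<close>)

lemma sq_norm_block_state: "l \<le> r \<Longrightarrow> sq_norm (block_width l) (block_state l) = 1"
  unfolding block_state_def using valid_inner
  by (subst sq_norm_run_circuit) (auto simp: block_width_def valid_circuit_idle)

lemma sq_norm_mid_state: "sq_norm total mid_state = 1"
  unfolding mid_state_def by (simp add: sq_norm_run_circuit valid_block_stage[OF valid_inner])

lemma block_wrong_weight:
  assumes l0: "l0 < r"
  shows "(\<Sum>y\<in>bits total. if y (l0 * s) \<noteq> block_parities l0 then (cmod (mid_state y))\<^sup>2 else 0)
       = parity_error D (s + A) Lb Mb s (block_input l0)"
proof -
  have out: "y (l0 * s) = blocks.view l0 y 0" for y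
    using l0 s_pos by (simp add: block_width_def block_emb_output)
  have mid: "(cmod (mid_state y))\<^sup>2 = (\<Prod>l\<in>{..r}. (cmod (block_state l (blocks.view l y)))\<^sup>2)" for y
    by (simp add: mid_state_tensor prod_norm[symmetric] prod_power_distrib)
  have "(\<Sum>y\<in>bits total. if y (l0 * s) \<noteq> block_parities l0 then (cmod (mid_state y))\<^sup>2 else 0)
      = (\<Sum>y\<in>bits total. if blocks.view l0 y 0 \<noteq> block_parities l0
           then \<Prod>l\<in>{..r}. (cmod (block_state l (blocks.view l y)))\<^sup>2 else 0)"
    by (simp only: out mid)
  also have "\<dots> = wrong_weight (block_width l0) (block_state l0) (block_parities l0)
      * (\<Prod>l\<in>{..r} - {l0}. sq_norm (block_width l) (block_state l))"
    unfolding wrong_weight_def sq_norm_def using l0 by (subst blocks.sum_bits_marginal) simp_all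
  also have "\<dots> = wrong_weight (s + A) (run_circuit (s + A) Lb Mb D (input_state s (s + A) (block_input l0)))
      (parity s (block_input l0))"
    using l0 prod.neutral[of "{..r} - {l0}" "\<lambda>l. sq_norm (block_width l) (block_state l)"]
    by (simp add: sq_norm_block_state) (simp add: block_state_def block_width_def block_parities_def)
  also have "\<dots> = parity_error D (s + A) Lb Mb s (block_input l0)"
    using s_pos by (simp add: parity_error_eq_wrong_weight[OF valid_inner])
  finally show ?thesis .
qed

definition outer_input :: "nat \<Rightarrow> bool" where
  "outer_input = restrict (\<lambda>i. i < r \<and> block_parities i) {..<r + B}"

text \<open>The part of mid_state in which the register of the outer circuit holds its correct input:
  the block outputs are the block parities and the outer ancillae are 0.\<close>
definition good :: qstate where
  "good y = (if outer.view 0 y = outer_input then mid_state y else 0)"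

definition good_rest :: qstate where
  "good_rest w = mid_state (outer.glue (\<lambda>l. if l = 0 then outer_input else w))"

lemma good_tensor:
  assumes y: "y \<in> bits total"
  shows "good y = input_state r (r + B) block_parities (outer.view 0 y) * good_rest (outer.view 1 y)"
proof (cases "outer.view 0 y = outer_input")
  case True
  have "outer.glue (\<lambda>l. if l = 0 then outer_input else outer.view 1 y) = outer.glue (\<lambda>l. outer.view l y)"
    by (rule outer.glue_cong) (auto simp: True)
  then have "good_rest (outer.view 1 y) = mid_state y"
    unfolding good_rest_def outer.glue_view[OF y] by simp
  then show ?thesis
    using True by (simp add: good_def input_state_def outer_input_def)
next
  case False
  then show ?thesis by (simp add: good_def input_state_def outer_input_def outer_width_def)
qed

lemma sq_norm_good_rest: "sq_norm (outer_width 1) good_rest \<le> 1"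
proof -
  have "sq_norm (outer_width 1) good_rest
      = (\<Sum>y\<in>bits total. if outer.view 0 y = outer_input
           then \<Prod>l\<in>{0, 1}. (if l = 0 then 1 else (cmod (good_rest (outer.view l y)))\<^sup>2) else 0)"
    unfolding sq_norm_def
    by (subst outer.sum_bits_marginal[where f="\<lambda>l z. if l = 0 then 1 else (cmod (good_rest z))\<^sup>2"])
       (auto simp: outer_width_def outer_input_def)
  also have "\<dots> = (\<Sum>y\<in>bits total. (cmod (good y))\<^sup>2)"
    by (intro sum.cong refl) (auto simp: good_tensor input_state_def outer_input_def outer_width_def norm_mult)
  also have "\<dots> \<le> sq_norm total mid_state"
    unfolding sq_norm_def by (intro sum_mono) (simp add: good_def)
  finally show ?thesis by (simp add: sq_norm_mid_state)
qed

lemma mid_state_outer_ancilla: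
  assumes y: "y \<in> bits total" and i: "r \<le> i" "i < r + B" and yi: "y (outer_emb i)"
  shows "mid_state y = 0"
proof -
  have "i - r < B" using i by linarith
  then have view: "blocks.view r y (i - r)" using i yi by (simp add: block_width_def outer_emb_def)
  have "blocks.view r y \<noteq> restrict (\<lambda>_. False) {..<B}"
  proof
    assume "blocks.view r y = restrict (\<lambda>_. False) {..<B}"
    then have "blocks.view r y (i - r) = False" using \<open>i - r < B\<close> by simp
    then show False using view by simp
  qed
  then have "block_state r (blocks.view r y) = 0"
    by (simp add: block_state_def run_circuit_idle block_width_def input_state_def)
  then show ?thesis unfolding mid_state_tensor by (intro prod_zero) auto
qed

lemma cmod_bad_le:
  assumes y: "y \<in> bits total"
  shows "(cmod (mid_state y - good y))\<^sup>2
    \<le> (\<Sum>l<r. if y (l * s) \<noteq> block_parities l then (cmod (mid_state y))\<^sup>2 else 0)"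
proof (cases "outer.view 0 y = outer_input")
  case False
  then obtain i where i: "i < r + B" "y (outer_emb i) \<noteq> outer_input i"
    using bits_eqI[OF reg_bits_in_bits, of outer_input "r + B"] by (auto simp: outer_width_def outer_split_def outer_input_def)
  show ?thesis
  proof (cases "i < r")
    case True
    then have "y (i * s) \<noteq> block_parities i"
      using i by (simp add: outer_emb_def block_emb_output outer_input_def)
    then have "(cmod (mid_state y))\<^sup>2 = (if y (i * s) \<noteq> block_parities i then (cmod (mid_state y))\<^sup>2 else 0)"
      by simp
    also have "\<dots> \<le> (\<Sum>l<r. if y (l * s) \<noteq> block_parities l then (cmod (mid_state y))\<^sup>2 else 0)"
      by (rule member_le_sum) (use True in auto)
    finally have "(cmod (mid_state y))\<^sup>2 \<le> (\<Sum>l<r. if y (l * s) \<noteq> block_parities l then (cmod (mid_state y))\<^sup>2 else 0)" .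
    then show ?thesis using False by (simp add: good_def)
  next
    case False
    then have "mid_state y = 0"
      using i by (intro mid_state_outer_ancilla[OF y, of i]) (auto simp: outer_input_def)
    then show ?thesis by (simp add: good_def sum_nonneg)
  qed
qed (simp add: good_def sum_nonneg)

lemma sq_norm_bad_le:
  fixes eF :: real
  assumes eF: "\<forall>x'\<in>bits s. parity_error D (s + A) Lb Mb s x' \<le> eF"
  shows "sq_norm total (\<lambda>y. mid_state y - good y) \<le> r * eF"
proof -
  have "sq_norm total (\<lambda>y. mid_state y - good y)
      \<le> (\<Sum>y\<in>bits total. \<Sum>l<r. if y (l * s) \<noteq> block_parities l then (cmod (mid_state y))\<^sup>2 else 0)"
    unfolding sq_norm_def by (intro sum_mono cmod_bad_le)
  also have "\<dots> = (\<Sum>l<r. parity_error D (s + A) Lb Mb s (block_input l))"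
    by (subst sum.swap) (rule sum.cong[OF refl], rule block_wrong_weight, simp)
  also have "\<dots> \<le> (\<Sum>l<r. eF)"
    using eF by (intro sum_mono) (simp add: block_input_def)
  finally show ?thesis by simp
qed

lemma outer_stage_good:
  "run_circuit total (outer_stage_gates Lo) (outer_stage_layers Mo) D0 good y
     = run_circuit (r + B) Lo Mo D0 (input_state r (r + B) block_parities) (outer.view 0 y)
       * good_rest (outer.view 1 y)"
  unfolding outer_stage_gates_def outer_stage_layers_def
  by (subst outer.run_circuit_tensor[where \<phi>="\<lambda>l. if l = 0 then input_state r (r + B) block_parities else good_rest"])
     (use valid_outer in \<open>auto simp: valid_circuit_def good_tensor outer_width_def valid_cz_layer_def run_circuit_idle\<close>)

lemma wrong_weight_outer_stage_good:
  "wrong_weight total (run_circuit total (outer_stage_gates Lo) (outer_stage_layers Mo) D0 good) (parity n x)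
     \<le> parity_error D0 (r + B) Lo Mo r block_parities"
proof -
  let ?W = "run_circuit (r + B) Lo Mo D0 (input_state r (r + B) block_parities)"
  let ?g = "\<lambda>l z. if l = (0::nat) then (cmod (?W z))\<^sup>2 else (cmod (good_rest z))\<^sup>2"
  have out: "outer.view 0 y 0 = y 0" for y
    using r_pos by (simp add: outer_width_def outer_split_def outer_emb_zero)
  have "wrong_weight total (run_circuit total (outer_stage_gates Lo) (outer_stage_layers Mo) D0 good) (parity n x)
      = (\<Sum>y\<in>bits total. if outer.view 0 y 0 \<noteq> parity r block_parities
          then \<Prod>l\<in>{0, 1}. ?g l (outer.view l y) else 0)"
    unfolding wrong_weight_def outer_stage_good parity_eq_block_parities
    by (intro sum.cong refl) (simp add: out norm_mult power_mult_distrib)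
  also have "\<dots> = wrong_weight (r + B) ?W (parity r block_parities) * sq_norm (outer_width 1) good_rest"
    unfolding wrong_weight_def sq_norm_def
    by (subst outer.sum_bits_marginal[where f="?g" and k=0]) (simp_all add: outer_width_def cong: if_cong)
  also have "\<dots> \<le> wrong_weight (r + B) ?W (parity r block_parities)"
    using sq_norm_good_rest wrong_weight_nonneg by (rule mult_left_le)
  also have "\<dots> = parity_error D0 (r + B) Lo Mo r block_parities"
    using r_pos by (simp add: parity_error_eq_wrong_weight[OF valid_outer])
  finally show ?thesis .
qed

theorem parity_error_composed:
  fixes eF eB :: real
  assumes eF: "\<forall>x'\<in>bits s. parity_error D (s + A) Lb Mb s x' \<le> eF"
    and eB: "\<forall>p\<in>bits r. parity_error D0 (r + B) Lo Mo r p \<le> eB"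
  shows "parity_error (Suc D + D0) total (composed_gates D Lb Lo) (composed_layers D Mb Mo) n x
    \<le> 2 * eB + 2 * (r * eF)"
proof -
  let ?V = "run_circuit total (outer_stage_gates Lo) (outer_stage_layers Mo) D0"
  have "run_circuit total (composed_gates D Lb Lo) (composed_layers D Mb Mo) (Suc D + D0) (input_state n total x)
      = ?V (\<lambda>y. good y + (mid_state y - good y))"
    unfolding composed_gates_def composed_layers_def run_circuit_seq mid_state_def by simp
  moreover have "parity_error (Suc D + D0) total (composed_gates D Lb Lo) (composed_layers D Mb Mo) n x
      = wrong_weight total (run_circuit total (composed_gates D Lb Lo) (composed_layers D Mb Mo) (Suc D + D0)
          (input_state n total x)) (parity n x)"
    using r_pos s_pos by (intro parity_error_eq_wrong_weight valid_composed valid_inner valid_outer) simp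
  ultimately have "parity_error (Suc D + D0) total (composed_gates D Lb Lo) (composed_layers D Mb Mo) n x
      = wrong_weight total (\<lambda>y. ?V good y + ?V (\<lambda>y. mid_state y - good y) y) (parity n x)"
    by (simp only: run_circuit_add)
  also have "\<dots> \<le> 2 * wrong_weight total (?V good) (parity n x)
      + 2 * wrong_weight total (?V (\<lambda>y. mid_state y - good y)) (parity n x)"
    by (rule wrong_weight_add_le)
  also have "wrong_weight total (?V good) (parity n x) \<le> eB"
    using order_trans[OF wrong_weight_outer_stage_good] eB restrict_in_bits
    unfolding block_parities_def by blast
  also have "wrong_weight total (?V (\<lambda>y. mid_state y - good y)) (parity n x)
      \<le> sq_norm total (?V (\<lambda>y. mid_state y - good y))"
    by (rule wrong_weight_le_sq_norm)
  also have "\<dots> = sq_norm total (\<lambda>y. mid_state y - good y)"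
    by (rule sq_norm_run_circuit[OF valid_outer_stage[OF valid_outer]])
  also have "\<dots> \<le> r * eF"
    by (rule sq_norm_bad_le[OF eF])
  finally show ?thesis by simp
qed

end

section \<open>Negligible functions\<close>

lemma negl_iff: "negl \<epsilon> \<longleftrightarrow> (\<forall>K. \<exists>N. \<forall>n\<ge>N. \<bar>\<epsilon> n\<bar> < 1 / real n ^ K)"
  unfolding negl_def eventually_sequentially ..

lemma negl_mono:
  assumes "negl b" "\<And>n. \<bar>a n\<bar> \<le> \<bar>b n\<bar>"
  shows "negl a"
  unfolding negl_def
proof
  fix K
  show "\<forall>\<^sub>F n in sequentially. \<bar>a n\<bar> < 1 / real n ^ K"
    using assms(1) unfolding negl_def
    by (rule eventually_mono[OF spec[of _ K]]) (rule le_less_trans[OF assms(2)])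
qed

lemma negl_mult_of_nat:
  assumes "negl a"
  shows "negl (\<lambda>n. real n * a n)"
  unfolding negl_def
proof
  fix K
  have "\<forall>\<^sub>F n in sequentially. \<bar>a n\<bar> < 1 / real n ^ Suc K"
    using assms unfolding negl_def by blast
  moreover have "\<forall>\<^sub>F n in sequentially. 1 \<le> n" by (rule eventually_ge_at_top)
  ultimately show "\<forall>\<^sub>F n in sequentially. \<bar>real n * a n\<bar> < 1 / real n ^ K"
  proof eventually_elim
    case (elim n)
    then have "real n * \<bar>a n\<bar> < real n * (1 / real n ^ Suc K)"
      by (intro mult_strict_left_mono) auto
    also have "\<dots> = 1 / real n ^ K" using elim by simp
    finally show ?case by (simp add: abs_mult)
  qed
qed

lemma negl_scale:
  assumes "negl a"
  shows "negl (\<lambda>n. c * a n)"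
  unfolding negl_def
proof
  fix K
  have "\<forall>\<^sub>F n in sequentially. \<bar>a n\<bar> < 1 / real n ^ Suc K"
    using assms unfolding negl_def by blast
  moreover have "\<forall>\<^sub>F n in sequentially. nat \<lceil>\<bar>c\<bar> + 1\<rceil> \<le> n" by (rule eventually_ge_at_top)
  ultimately show "\<forall>\<^sub>F n in sequentially. \<bar>c * a n\<bar> < 1 / real n ^ K"
  proof eventually_elim
    case (elim n)
    then have "\<bar>c\<bar> + 1 \<le> real n" by linarith
    then have n: "0 < real n" by linarith
    have "\<bar>c * a n\<bar> \<le> real n * \<bar>a n\<bar>"
      unfolding abs_mult using \<open>\<bar>c\<bar> + 1 \<le> real n\<close> by (intro mult_right_mono) auto
    also have "\<dots> < real n * (1 / real n ^ Suc K)"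
      using elim n by (intro mult_strict_left_mono) auto
    also have "\<dots> = 1 / real n ^ K" using n by simp
    finally show ?case .
  qed
qed

lemma negl_add:
  assumes "negl a" "negl b"
  shows "negl (\<lambda>n. a n + b n)"
  unfolding negl_def
proof
  fix K
  have "\<forall>\<^sub>F n in sequentially. \<bar>a n\<bar> < 1 / real n ^ Suc K"
    "\<forall>\<^sub>F n in sequentially. \<bar>b n\<bar> < 1 / real n ^ Suc K"
    using assms unfolding negl_def by blast+
  moreover have "\<forall>\<^sub>F n in sequentially. 2 \<le> n" by (rule eventually_ge_at_top)
  ultimately show "\<forall>\<^sub>F n in sequentially. \<bar>a n + b n\<bar> < 1 / real n ^ K"
  proof eventually_elim
    case (elim n)
    then have "\<bar>a n + b n\<bar> < 2 / real n ^ Suc K" by linarith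
    also have "\<dots> \<le> real n / real n ^ Suc K"
      using elim by (intro divide_right_mono) auto
    also have "\<dots> = 1 / real n ^ K" using elim by simp
    finally show ?case .
  qed
qed

lemma inverse_power_le_of_root_bound:
  fixes F N C :: real
  assumes C: "0 < C" and N: "0 < N" and F: "N \<le> C * F ^ k" and CN: "C ^ Suc K \<le> N"
  shows "1 / (F ^ k) ^ Suc K \<le> 1 / N ^ K"
proof -
  have pos: "0 < N / C" using N C by simp
  have "1 / (F ^ k) ^ Suc K \<le> 1 / (N / C) ^ Suc K"
    using F pos C by (intro frac_le power_mono zero_less_power) (auto simp: field_simps)
  also have "\<dots> = C ^ Suc K / (N * N ^ K)" by (simp add: power_divide)
  also have "\<dots> \<le> N / (N * N ^ K)" using CN N by (intro divide_right_mono) simp_all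
  also have "\<dots> = 1 / N ^ K" using N by simp
  finally show ?thesis .
qed

lemma negl_compose_root:
  assumes a: "negl a" and f: "\<And>n. 1 \<le> n \<Longrightarrow> real n \<le> C * real (f n) ^ k"
  shows "negl (\<lambda>n. a (f n))"
  unfolding negl_iff
proof
  fix K
  obtain N0 where N0: "\<And>m. m \<ge> N0 \<Longrightarrow> \<bar>a m\<bar> < 1 / real m ^ (k * Suc K)"
    using a unfolding negl_iff by blast
  have C: "0 < C"
  proof (rule ccontr)
    assume "\<not> 0 < C"
    then have "C * real (f 1) ^ k \<le> 0" by (simp add: mult_nonpos_nonneg)
    then show False using f[of 1] by simp
  qed
  define N where "N = nat \<lceil>C * real N0 ^ k + C ^ Suc K\<rceil> + 1"
  show "\<exists>N. \<forall>n\<ge>N. \<bar>a (f n)\<bar> < 1 / real n ^ K"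
  proof (intro exI allI impI)
    fix n assume "N \<le> n"
    then have n: "C * real N0 ^ k + C ^ Suc K < real n" "1 \<le> n"
      using real_nat_ceiling_ge[of "C * real N0 ^ k + C ^ Suc K"] unfolding N_def by linarith+
    have "N0 \<le> f n"
    proof (rule ccontr)
      assume "\<not> N0 \<le> f n"
      then have "real (f n) ^ k \<le> real N0 ^ k" by (intro power_mono) auto
      then have "real n \<le> C * real N0 ^ k"
        using f[OF n(2)] C by (meson mult_left_mono order_trans less_imp_le)
      then show False using n(1) zero_less_power[OF C, of "Suc K"] by linarith
    qed
    have "\<bar>a (f n)\<bar> < 1 / (real (f n) ^ k) ^ Suc K"
      using N0[OF \<open>N0 \<le> f n\<close>] by (simp only: power_mult)
    also have "\<dots> \<le> 1 / real n ^ K"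
      using C n f[OF n(2)] zero_le_power[of "real N0" k]
      by (intro inverse_power_le_of_root_bound) (auto intro: order_trans[OF _ less_imp_le[OF n(1)]])
    finally show "\<bar>a (f n)\<bar> < 1 / real n ^ K" .
  qed
qed

section \<open>Reducing the ancilla exponent\<close>

definition num_blocks :: "nat \<Rightarrow> nat \<Rightarrow> nat" where
  "num_blocks k n = (GREATEST r. r ^ k \<le> n)"

definition block_len :: "nat \<Rightarrow> nat \<Rightarrow> nat" where
  "block_len k n = (n + num_blocks k n - 1) div num_blocks k n"

lemma base_le_of_pow_le:
  assumes "1 \<le> k" "r ^ k \<le> n"
  shows "r \<le> (n::nat)"
proof (cases "r = 0")
  case False
  then have "r \<le> r ^ k" using assms(1) by (intro self_le_power) auto
  then show ?thesis using assms(2) by simp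
qed simp

lemma num_blocks_le:
  assumes k: "1 \<le> k"
  shows "num_blocks k n ^ k \<le> n" "num_blocks k n \<le> n"
proof -
  note bound = base_le_of_pow_le[OF k]
  show "num_blocks k n ^ k \<le> n"
    unfolding num_blocks_def by (rule GreatestI_nat[of _ 0]) (use k bound in \<open>auto simp: zero_power\<close>)
  then show "num_blocks k n \<le> n" by (rule bound)
qed

lemma num_blocks_bounds:
  assumes k: "1 \<le> k" and n: "1 \<le> n"
  shows "1 \<le> num_blocks k n" "n < (2 * num_blocks k n) ^ k"
proof -
  have greatest: "r \<le> num_blocks k n" if "r ^ k \<le> n" for r
    unfolding num_blocks_def
    by (rule Greatest_le_nat[where P="\<lambda>r. r ^ k \<le> n" and b=n, OF that])
       (rule base_le_of_pow_le[OF k])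
  show pos: "1 \<le> num_blocks k n" using greatest[of 1] n by simp
  have "n < (num_blocks k n + 1) ^ k"
    using greatest[of "num_blocks k n + 1"] by (cases "n < (num_blocks k n + 1) ^ k") simp_all
  also have "\<dots> \<le> (2 * num_blocks k n) ^ k" using pos by (intro power_mono) auto
  finally show "n < (2 * num_blocks k n) ^ k" .
qed

lemma block_len_bounds:
  assumes k: "2 \<le> k" and n: "1 \<le> n"
  shows "n \<le> num_blocks k n * block_len k n" "num_blocks k n * block_len k n < n + num_blocks k n"
    "1 \<le> block_len k n" "n \<le> block_len k n ^ 2"
proof -
  let ?r = "num_blocks k n" and ?s = "block_len k n"
  have r: "1 \<le> ?r" "?r ^ k \<le> n" using num_blocks_bounds num_blocks_le k n by simp_all
  have "?r * ?s + (n + ?r - 1) mod ?r = n + ?r - 1"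
    unfolding block_len_def by (rule mult_div_mod_eq)
  moreover have "(n + ?r - 1) mod ?r < ?r" using r by simp
  ultimately show rs: "n \<le> ?r * ?s" "?r * ?s < n + ?r" using r by linarith+
  then show "1 \<le> ?s" using n by (cases ?s) auto
  have "?r * ?r \<le> ?r * ?s"
  proof -
    have "?r ^ 2 \<le> ?r ^ k" using r k by (intro power_increasing) auto
    then show ?thesis using r(2) rs(1) unfolding power2_eq_square by linarith
  qed
  then have "?r \<le> ?s" using r by simp
  then show "n \<le> ?s ^ 2" using rs(1) by (simp add: power2_eq_square order_trans[OF _ mult_le_mono1])
qed

lemma negl_composed_error:
  assumes "negl \<epsilon>0" "negl \<epsilon>" "2 \<le> k"
  shows "negl (\<lambda>n. 2 * \<epsilon>0 (num_blocks k n) + 2 * (real (num_blocks k n) * \<epsilon> (block_len k n)))"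
proof (intro negl_add negl_scale)
  show "negl (\<lambda>n. \<epsilon>0 (num_blocks k n))"
  proof (rule negl_compose_root[OF assms(1)])
    fix n :: nat assume "1 \<le> n"
    then have "n < (2 * num_blocks k n) ^ k" using num_blocks_bounds assms(3) by simp
    then show "real n \<le> 2 ^ k * real (num_blocks k n) ^ k"
      by (metis less_imp_le of_nat_le_iff of_nat_mult of_nat_numeral of_nat_power power_mult_distrib)
  qed
  have "negl (\<lambda>n. \<epsilon> (block_len k n))"
    by (rule negl_compose_root[OF assms(2), where C=1 and k=2]) (use block_len_bounds assms(3) in \<open>simp flip: of_nat_power\<close>)
  then show "negl (\<lambda>n. real (num_blocks k n) * \<epsilon> (block_len k n))"
  proof (rule negl_mono[OF negl_mult_of_nat])
    fix n
    show "\<bar>real (num_blocks k n) * \<epsilon> (block_len k n)\<bar> \<le> \<bar>real n * \<epsilon> (block_len k n)\<bar>"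
      using num_blocks_le(2)[of k n] assms(3) by (simp add: abs_mult mult_right_mono)
  qed
qed

lemma blocks_powr_bound:
  fixes R S N e :: real
  assumes R: "1 \<le> R" and S: "0 \<le> S" and N: "1 \<le> N" and e: "0 \<le> e" and k: "0 < k"
    and RS: "R * S \<le> 2 * N" and root: "N < (2 * R) ^ k"
  shows "R * S powr (1 + e) \<le> 2 powr (1 + 2 * e) * N powr (1 + e - e / k)"
proof -
  have "N powr (1 / k) < 2 * R"
  proof -
    have "N powr (1 / k) < ((2 * R) ^ k) powr (1 / k)"
      using root N k by (intro powr_less_mono2) auto
    also have "\<dots> = ((2 * R) powr real k) powr (1 / k)" using R by (subst powr_realpow) auto
    also have "\<dots> = 2 * R" using R k by (simp add: powr_powr)
    finally show ?thesis .
  qed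
  then have "(N powr (1 / k) / 2) powr e \<le> R powr e"
    using N e by (intro powr_mono2) auto
  moreover have "(N powr (1 / k) / 2) powr e = N powr (e / k) / 2 powr e"
    using N by (simp add: powr_divide powr_powr)
  ultimately have Re: "N powr (e / k) / 2 powr e \<le> R powr e" by simp
  have "R * S powr (1 + e) = (R * S) powr (1 + e) / R powr e"
    using R S by (simp add: powr_mult powr_add field_simps)
  also have "\<dots> \<le> (2 * N) powr (1 + e) / (N powr (e / k) / 2 powr e)"
    using RS Re R N S e by (intro frac_le powr_mono2) auto
  also have "\<dots> = 2 powr (1 + 2 * e) * N powr (1 + e - e / k)"
    using N by (simp add: powr_mult powr_add powr_diff field_simps powr_add[symmetric])
  finally show ?thesis .
qed

definition composed_ancillae :: "nat \<Rightarrow> (nat \<Rightarrow> nat) \<Rightarrow> (nat \<Rightarrow> nat) \<Rightarrow> nat \<Rightarrow> nat" where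
  "composed_ancillae k a a0 n = num_blocks k n * block_len k n
     + num_blocks k n * a (block_len k n) + a0 (num_blocks k n) - n"

lemma blocks_ancillae_bound:
  fixes C e :: real
  assumes k: "2 \<le> k" and n: "1 \<le> n" and C: "0 \<le> C" and e: "0 \<le> e"
    and a_bound: "\<forall>n\<ge>1. real (a n) \<le> C * real n powr (1 + e)"
  shows "real (num_blocks k n) * real (a (block_len k n)) \<le> C * 2 powr (1 + 2 * e) * real n powr (1 + e - e / k)"
proof -
  define r where "r = num_blocks k n"
  define s where "s = block_len k n"
  have r: "1 \<le> r" "n < (2 * r) ^ k" using num_blocks_bounds k n unfolding r_def by simp_all
  have "r \<le> n" using num_blocks_le k unfolding r_def by simp
  then have rs: "r * s \<le> 2 * n" using block_len_bounds[OF k n] unfolding r_def s_def by linarith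
  have "real r * real s powr (1 + e) \<le> 2 powr (1 + 2 * e) * real n powr (1 + e - e / k)"
  proof (rule blocks_powr_bound)
    show "real r * real s \<le> 2 * real n" using rs of_nat_mono by fastforce
    show "real n < (2 * real r) ^ k" using r(2) by (metis of_nat_less_iff of_nat_mult of_nat_numeral of_nat_power)
  qed (use r n e k in auto)
  then have "C * (real r * real s powr (1 + e)) \<le> C * (2 powr (1 + 2 * e) * real n powr (1 + e - e / k))"
    using C by (rule mult_left_mono)
  moreover have "real r * real (a s) \<le> C * (real r * real s powr (1 + e))"
    using mult_left_mono[OF a_bound[rule_format, of s], of "real r"] block_len_bounds[OF k n]
    by (simp add: mult_ac s_def)
  ultimately show ?thesis by (simp add: r_def s_def)
qed

lemma composed_ancillae_bound:
  fixes C c e :: real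
  assumes k: "2 \<le> k" and C: "0 \<le> C" and c: "0 \<le> c" and e: "0 \<le> e"
    and a_bound: "\<forall>n\<ge>1. real (a n) \<le> C * real n powr (1 + e)"
    and a0_bound: "\<forall>n\<ge>1. real (a0 n) \<le> c * real n ^ k" and n: "1 \<le> n"
  shows "real (composed_ancillae k a a0 n) \<le> (1 + c + C * 2 powr (1 + 2 * e)) * real n powr (1 + e - e / k)"
proof -
  define r where "r = num_blocks k n"
  define s where "s = block_len k n"
  let ?P = "real n powr (1 + e - e / k)"
  have r: "1 \<le> r" "r \<le> n" "r ^ k \<le> n"
    using num_blocks_bounds num_blocks_le k n unfolding r_def by simp_all
  have "e * 1 \<le> e * real k" using e k by (intro mult_left_mono) auto
  then have "real n powr 1 \<le> ?P"
    using n k by (intro powr_mono) (auto simp: field_simps)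
  then have n_le: "real n \<le> ?P" using n by simp
  have "r * s + r * a s + a0 r - n \<le> r + r * a s + a0 r"
    using block_len_bounds[OF k n] unfolding r_def s_def by linarith
  then have "real (composed_ancillae k a a0 n) \<le> real r + real r * real (a s) + real (a0 r)"
    unfolding composed_ancillae_def r_def s_def using of_nat_mono by fastforce
  moreover have "real r * real (a s) \<le> C * 2 powr (1 + 2 * e) * ?P"
    unfolding r_def s_def by (rule blocks_ancillae_bound[OF k n C e a_bound])
  moreover have "real (a0 r) \<le> c * ?P"
  proof -
    have "real r ^ k \<le> real n" using r(3) by (metis of_nat_le_iff of_nat_power)
    then have "real (a0 r) \<le> c * real n" using a0_bound r(1) c by (meson mult_left_mono order_trans)
    also have "\<dots> \<le> c * ?P" using n_le c by (rule mult_left_mono)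
    finally show ?thesis .
  qed
  moreover have "real r \<le> ?P" using r(2) n_le by linarith
  ultimately have "real (composed_ancillae k a a0 n) \<le> ?P + c * ?P + C * 2 powr (1 + 2 * e) * ?P"
    by linarith
  then show ?thesis by (simp add: algebra_simps)
qed

lemma composed_input_blocks:
  assumes "qac0_computes_parity d a0 L0 M0" "qac0_computes_parity D a L M" "2 \<le> k" "1 \<le> n"
  shows "composed_input (num_blocks k n) (block_len k n) (a (block_len k n)) (a0 (num_blocks k n))
    D d (L (block_len k n)) (L0 (num_blocks k n)) (M (block_len k n)) (M0 (num_blocks k n)) n"
  using assms num_blocks_bounds[of k n] block_len_bounds[of k n]
  unfolding composed_input_def composed_parity_def block_layout_def composed_input_axioms_def
    composed_parity_axioms_def qac0_computes_parity_def
  by auto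

definition composed_family_gates where
  "composed_family_gates k D a a0 L L0 n = block_layout.composed_gates (num_blocks k n) (block_len k n)
     (a (block_len k n)) (a0 (num_blocks k n)) D (L (block_len k n)) (L0 (num_blocks k n))"

definition composed_family_layers where
  "composed_family_layers k D a a0 M M0 n = block_layout.composed_layers (num_blocks k n) (block_len k n)
     (a (block_len k n)) (a0 (num_blocks k n)) D (M (block_len k n)) (M0 (num_blocks k n))"

lemma qac0_computes_parity_composed:
  assumes outer: "qac0_computes_parity d a0 L0 M0" and inner: "qac0_computes_parity D a L M"
    and k: "2 \<le> k"
  shows "qac0_computes_parity (Suc D + d) (composed_ancillae k a a0)
    (composed_family_gates k D a a0 L L0) (composed_family_layers k D a a0 M M0)"
proof -
  define r where "r n = num_blocks k n" for n
  define s where "s n = block_len k n" for n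
  obtain \<epsilon> where \<epsilon>: "negl \<epsilon>" "\<forall>n\<ge>1. \<forall>x\<in>bits n. parity_error D (n + a n) (L n) (M n) n x \<le> \<epsilon> n"
    using inner unfolding qac0_computes_parity_def by blast
  obtain \<epsilon>0 where \<epsilon>0: "negl \<epsilon>0" "\<forall>n\<ge>1. \<forall>x\<in>bits n. parity_error d (n + a0 n) (L0 n) (M0 n) n x \<le> \<epsilon>0 n"
    using outer unfolding qac0_computes_parity_def by blast
  have rs: "1 \<le> r n" "1 \<le> s n" "n \<le> r n * s n" if "1 \<le> n" for n
    using num_blocks_bounds block_len_bounds k that by (simp_all add: r_def s_def)
  note composed = composed_input_blocks[OF outer inner k, folded r_def s_def]
  have size: "n + composed_ancillae k a a0 n = r n * s n + r n * a (s n) + a0 (r n)" if "1 \<le> n" for n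
    using rs[OF that] by (simp add: composed_ancillae_def flip: r_def s_def)
  show ?thesis
    unfolding qac0_computes_parity_def
  proof (intro conjI allI impI exI[of _ "\<lambda>n. 2 * \<epsilon>0 (r n) + 2 * (real (r n) * \<epsilon> (s n))"] ballI)
    fix n :: nat assume n: "1 \<le> n"
    interpret composed_input "r n" "s n" "a (s n)" "a0 (r n)" D d "L (s n)" "L0 (r n)" "M (s n)" "M0 (r n)" n undefined
      by (rule composed[OF n])
    show "valid_circuit (Suc D + d) (n + composed_ancillae k a a0 n)
        (composed_family_gates k D a a0 L L0 n) (composed_family_layers k D a a0 M M0 n)"
      unfolding size[OF n] composed_family_gates_def composed_family_layers_def r_def[symmetric] s_def[symmetric]
      by (rule valid_composed[OF valid_inner valid_outer])
  next
    show "negl (\<lambda>n. 2 * \<epsilon>0 (r n) + 2 * (real (r n) * \<epsilon> (s n)))"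
      unfolding r_def s_def by (rule negl_composed_error[OF \<epsilon>0(1) \<epsilon>(1) k])
  next
    fix n :: nat and x assume n: "1 \<le> n" and "x \<in> bits n"
    interpret composed_input "r n" "s n" "a (s n)" "a0 (r n)" D d "L (s n)" "L0 (r n)" "M (s n)" "M0 (r n)" n x
      by (rule composed[OF n])
    show "parity_error (Suc D + d) (n + composed_ancillae k a a0 n) (composed_family_gates k D a a0 L L0 n)
        (composed_family_layers k D a a0 M M0 n) n x \<le> 2 * \<epsilon>0 (r n) + 2 * (real (r n) * \<epsilon> (s n))"
      unfolding size[OF n] composed_family_gates_def composed_family_layers_def r_def[symmetric] s_def[symmetric]
      by (rule parity_error_composed) (use \<epsilon> \<epsilon>0 rs[OF n] in auto)
  qed
qed

lemma qac0_parity_compose: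
  fixes C c e :: real
  assumes outer: "qac0_computes_parity d a0 L0 M0" and a0: "\<forall>n\<ge>1. real (a0 n) \<le> c * real n ^ k"
    and inner: "qac0_computes_parity D a L M" and a: "\<forall>n\<ge>1. real (a n) \<le> C * real n powr (1 + e)"
    and k: "2 \<le> k" and C: "0 \<le> C" and c: "0 \<le> c" and e: "0 \<le> e"
  shows "\<exists>a' L' M'. qac0_computes_parity (Suc D + d) a' L' M' \<and>
    (\<forall>n\<ge>1. real (a' n) \<le> (1 + c + C * 2 powr (1 + 2 * e)) * real n powr (1 + e - e / k))"
  using qac0_computes_parity_composed[OF outer inner k] composed_ancillae_bound[OF k C c e a a0]
  by blast

lemma qac0_parity_iterate:
  fixes c :: real
  assumes outer: "qac0_computes_parity d a0 L0 M0" and a0: "\<forall>n\<ge>1. real (a0 n) \<le> c * real n ^ k"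
    and k: "2 \<le> k" and c: "0 \<le> c"
  shows "\<exists>a L M C. qac0_computes_parity (d + j * Suc d) a L M \<and> 0 \<le> C \<and>
    (\<forall>n\<ge>1. real (a n) \<le> C * real n powr (1 + (real k - 1) * ((real k - 1) / real k) ^ j))"
proof (induction j)
  case 0
  have "real n powr (1 + (real k - 1)) = real n ^ k" if "1 \<le> n" for n
    using that by (simp add: powr_realpow)
  then show ?case using outer a0 c by auto
next
  case (Suc j)
  let ?e = "(real k - 1) * ((real k - 1) / real k) ^ j"
  obtain a L M C where IH: "qac0_computes_parity (d + j * Suc d) a L M" "0 \<le> C"
    "\<forall>n\<ge>1. real (a n) \<le> C * real n powr (1 + ?e)"
    using Suc by blast
  have e: "0 \<le> ?e" using k by simp
  have "1 + ?e - ?e / real k = 1 + (real k - 1) * ((real k - 1) / real k) ^ Suc j"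
    using k by (simp add: field_simps)
  moreover have "Suc (d + j * Suc d) + d = d + Suc j * Suc d" by simp
  moreover have "0 \<le> 1 + c + C * 2 powr (1 + 2 * ?e)" using c IH(2) by simp
  moreover note qac0_parity_compose[OF outer a0 IH(1) IH(3) k IH(2) c e]
  ultimately show ?case by (simp only: add.assoc) blast
qed

lemma qac0_parity_truncate:
  assumes "qac0_computes_parity D a L M"
  shows "\<exists>L' M'. qac0_computes_parity D (\<lambda>n. if n < N then 0 else a n) L' M'"
proof -
  obtain \<epsilon> where \<epsilon>: "negl \<epsilon>" "\<forall>n\<ge>1. \<forall>x\<in>bits n. parity_error D (n + a n) (L n) (M n) n x \<le> \<epsilon> n"
    using assms unfolding qac0_computes_parity_def by blast
  define L' where "L' n = (if n < N then (\<lambda>_ _. id_gate) else L n)" for n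
  define M' where "M' n = (if n < N then (\<lambda>_. {}) else M n)" for n
  define \<epsilon>' where "\<epsilon>' n = (if n < N then 1 else \<epsilon> n)" for n
  have valid: "valid_circuit D (n + (if n < N then 0 else a n)) (L' n) (M' n)" if "1 \<le> n" for n
    using assms that valid_circuit_idle by (simp add: L'_def M'_def qac0_computes_parity_def)
  have "negl \<epsilon>'"
    unfolding negl_def
  proof
    fix K
    have "\<forall>\<^sub>F n in sequentially. \<bar>\<epsilon> n\<bar> < 1 / real n ^ K" using \<epsilon>(1) by (simp add: negl_def)
    moreover have "\<forall>\<^sub>F n in sequentially. N \<le> n" by (rule eventually_ge_at_top)
    ultimately show "\<forall>\<^sub>F n in sequentially. \<bar>\<epsilon>' n\<bar> < 1 / real n ^ K"
      by eventually_elim (simp add: \<epsilon>'_def)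
  qed
  moreover have "parity_error D (n + (if n < N then 0 else a n)) (L' n) (M' n) n x \<le> \<epsilon>' n"
    if "1 \<le> n" "x \<in> bits n" for n x
  proof -
    have "parity_error D (n + (if n < N then 0 else a n)) (L' n) (M' n) n x \<le> 1"
      using parity_error_le_1[OF valid[OF that(1)]] that(1) by simp
    then show ?thesis using \<epsilon>(2) that by (cases "n < N") (simp_all add: \<epsilon>'_def L'_def M'_def)
  qed
  ultimately show ?thesis
    unfolding qac0_computes_parity_def using valid by blast
qed

lemma powr_absorb_constant:
  fixes C e E :: real
  assumes "e < E"
  shows "\<exists>N. \<forall>n\<ge>N. C * real n powr (1 + e) \<le> real n powr (1 + E)"
proof (intro exI allI impI)
  fix n :: nat assume n: "nat \<lceil>max C 1 powr (1 / (E - e))\<rceil> + 1 \<le> n"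
  then have "max C 1 powr (1 / (E - e)) \<le> real n" by linarith
  then have "(max C 1 powr (1 / (E - e))) powr (E - e) \<le> real n powr (E - e)"
    using assms by (intro powr_mono2) auto
  then have "C \<le> real n powr (E - e)" using assms by (simp add: powr_powr)
  then have "C * real n powr (1 + e) \<le> real n powr (E - e) * real n powr (1 + e)"
    by (rule mult_right_mono) simp
  also have "\<dots> = real n powr (1 + E)" using n by (simp add: powr_add[symmetric] add_ac)
  finally show "C * real n powr (1 + e) \<le> real n powr (1 + E)" .
qed

lemma qac0_parity_shrink_ancillae:
  fixes C e E :: real
  assumes "qac0_computes_parity D a L M" "\<forall>n\<ge>1. real (a n) \<le> C * real n powr (1 + e)" "e < E"
  shows "\<exists>a' L' M'. qac0_computes_parity D a' L' M' \<and> (\<forall>n\<ge>1. real (a' n) \<le> real n powr (1 + E))"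
proof -
  obtain N where N: "\<And>n. N \<le> n \<Longrightarrow> C * real n powr (1 + e) \<le> real n powr (1 + E)"
    using powr_absorb_constant[OF assms(3)] by blast
  obtain L' M' where "qac0_computes_parity D (\<lambda>n. if n < N then 0 else a n) L' M'"
    using qac0_parity_truncate[OF assms(1)] by blast
  moreover have "\<forall>n\<ge>1. real (if n < N then 0 else a n) \<le> real n powr (1 + E)"
    using assms(2) N by (auto intro: order_trans)
  ultimately show ?thesis by blast
qed

text \<open>With q = - ln rho, rho ^ j = exp (- j * q). Since D = d + j * Suc d <= (j + 1) * (d + 1),
  once delta D >= 2 * (d + 1) / q the exponent D / delta D is at most (j + 1) * q / 2, which is
  about half the decay rate of rho ^ j.\<close>
lemma exists_depth_with_small_exponent:
  fixes \<delta> :: "real \<Rightarrow> real" and \<rho> c :: real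
  assumes \<delta>: "filterlim \<delta> at_top at_top" and \<rho>: "0 < \<rho>" "\<rho> < 1" and c: "0 < c"
  shows "\<exists>j. c * \<rho> ^ j < exp (- real (d + j * Suc d) / \<delta> (real (d + j * Suc d)))"
proof -
  define q where "q = - ln \<rho>"
  have q: "0 < q" using \<rho> by (simp add: q_def)
  obtain X where X: "\<And>x. X \<le> x \<Longrightarrow> 2 * (real d + 1) / q \<le> \<delta> x"
    using \<delta> unfolding filterlim_at_top eventually_at_top_linorder by blast
  define j :: nat where "j = nat \<lceil>max X (1 + 2 * ln c / q)\<rceil> + 1"
  define D where "D = d + j * Suc d"
  have j: "X < real j" "1 + 2 * ln c / q < real j" unfolding j_def by linarith+
  have "real j \<le> real D" by (simp add: D_def)
  then have "X \<le> real D" using j(1) by linarith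
  then have \<delta>D: "2 * (real d + 1) / q \<le> \<delta> (real D)" by (rule X)
  have "real D \<le> (real j + 1) * (real d + 1)" by (simp add: D_def algebra_simps)
  then have "real D / \<delta> (real D) \<le> (real j + 1) * (real d + 1) / (2 * (real d + 1) / q)"
    using \<delta>D q by (intro frac_le) auto
  also have "\<dots> = (real j + 1) * q / 2" using q by (simp add: field_simps)
  finally have ratio: "- ((real j + 1) * q / 2) \<le> - real D / \<delta> (real D)" by simp
  have "2 * ln c / q < real j - 1" using j(2) by linarith
  then have "2 * ln c < (real j - 1) * q" using q by (simp add: pos_divide_less_eq)
  then have "ln c < (real j - 1) * q / 2" by simp
  then have "c < exp ((real j - 1) * q / 2)" using c by (metis exp_less_mono exp_ln)
  then have "c * \<rho> ^ j < exp ((real j - 1) * q / 2) * exp (- (real j * q))"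
    using \<rho> by (simp add: q_def exp_of_nat_mult mult_strict_right_mono)
  also have "\<dots> = exp (- ((real j + 1) * q / 2))" by (simp add: exp_add[symmetric] field_simps)
  also have "\<dots> \<le> exp (- real D / \<delta> (real D))" using ratio by simp
  finally show ?thesis unfolding D_def by blast
qed

lemma poly_bound_normalize:
  fixes c :: real
  assumes "\<forall>n\<ge>1. real (a n) \<le> c * real n ^ k"
  shows "\<forall>n\<ge>1. real (a n) \<le> max c 0 * real n ^ max k 2"
proof (intro allI impI)
  fix n :: nat assume n: "1 \<le> n"
  have "c * real n ^ k \<le> max c 0 * real n ^ k" by (intro mult_right_mono) auto
  moreover have "real (a n) \<le> c * real n ^ k" using assms n by blast
  ultimately have "real (a n) \<le> max c 0 * real n ^ k" by linarith
  also have "\<dots> \<le> max c 0 * real n ^ max k 2" using n by (intro mult_left_mono power_increasing) auto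
  finally show "real (a n) \<le> max c 0 * real n ^ max k 2" .
qed

theorem corollary5p3:
  fixes \<delta> :: "real \<Rightarrow> real"
  assumes "filterlim \<delta> at_top at_top"
    and "\<forall>d anc L M. (\<forall>n\<ge>1. real (anc n) \<le> real n powr (1 + exp (- real d / \<delta> (real d))))
            \<longrightarrow> \<not> qac0_computes_parity d anc L M"
  shows "\<not> (\<exists>d anc L M c k. (\<forall>n\<ge>1. real (anc n) \<le> c * real n ^ k) \<and> qac0_computes_parity d anc L M)"
proof
  assume "\<exists>d anc L M c k. (\<forall>n\<ge>1. real (anc n) \<le> c * real n ^ k) \<and> qac0_computes_parity d anc L M"
  then obtain d anc L M c k where anc: "\<forall>n\<ge>1. real (anc n) \<le> c * real n ^ k"
    and base: "qac0_computes_parity d anc L M"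
    by blast
  define K where "K = real (max k 2)"
  have "2 \<le> K" by (simp add: K_def)
  then obtain j where j: "(K - 1) * ((K - 1) / K) ^ j < exp (- real (d + j * Suc d) / \<delta> (real (d + j * Suc d)))"
    using exists_depth_with_small_exponent[OF assms(1), where \<rho>="(K - 1) / K" and c="K - 1" and d=d]
    by auto
  obtain a L' M' C where "qac0_computes_parity (d + j * Suc d) a L' M'"
    "\<forall>n\<ge>1. real (a n) \<le> C * real n powr (1 + (K - 1) * ((K - 1) / K) ^ j)"
    using qac0_parity_iterate[OF base poly_bound_normalize[OF anc] max.cobounded2 max.cobounded2]
    unfolding K_def by blast
  then obtain a' L'' M'' where "qac0_computes_parity (d + j * Suc d) a' L'' M''"
    "\<forall>n\<ge>1. real (a' n) \<le> real n powr (1 + exp (- real (d + j * Suc d) / \<delta> (real (d + j * Suc d))))"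
    using qac0_parity_shrink_ancillae j by blast
  then show False using assms(2) by blast
qed

end
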